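(* Fix $0<p<1$, let $m(z)=\langle\phi,(zI-K_\infty)^{-1}\phi\rangle$, and set $\mu_n=\langle\phi,K_\infty^n\phi\rangle$ for $n\ge0$. Then for $|z|>\|K_\infty\|$, $m(z)=\sum_{n\ge0}\mu_nz^{-(n+1)}$. Moreover, the identity $$m(z)=\frac{m(z/p)}{1-m(z/p)}+\frac{m(z/(1-p))}{\big(1-m(z/p)\big)\big(1-m(z/p)-m(z/(1-p))\big)}\quad(|z|>\|K_\infty\|+1)$$ determines $(\mu_n)$ recursively: for each $n\ge1$ there is a polynomial $P_n\in\mathbb Q[p][X_0,\dots,X_{n-1}]$ with $(1-p^{n+1}-(1-p)^{n+1})\mu_n=P_n(\mu_0,\dots,\mu_{n-1})$, and $1-p^{n+1}-(1-p)^{n+1}>0$ for every $n\ge1$, so $\mu_n$ is uniquely determined by $\mu_0,\dots,\mu_{n-1}$. The first moments are $\mu_0=1$, $\mu_1=\frac1{2p(1-p)}=\frac1{1-q}$ with $q=p^2+(1-p)^2$, $\mu_2=\frac{p^2-p+1}{3p^2(1-p)^2}$, and $\mu_3=\frac{12p^4-24p^3+38p^2-26p+11}{24p^3(1-p)^3(p^2-p+2)}$.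
   Context: Let $S_0(x)=x/3$, $S_2(x)=(x+2)/3$ on $[0,1]$ and let $C$ be the middle-third Cantor set. For $0<p<1$, $\mu_p$ is the unique Borel probability measure on $[0,1]$ with $\mu_p=p\,\mu_p\circ S_0^{-1}+(1-p)\,\mu_p\circ S_2^{-1}$. For words $w\in\{0,2\}^n$, $S_w=S_{w_1}\circ\cdots\circ S_{w_n}$, $C_w=S_w(C)$. Inner product $\langle f,g\rangle=\int\overline fg\,d\mu_p$; $\phi=1_C$. $K_mf=\sum_{|u|\le m}\langle1_{C_u},f\rangle1_{C_u}$ and $K_\infty=\lim_{m\to\infty}K_m$ in operator norm (this limit exists and is compact, positive, self-adjoint). *)

theory Defs
  imports "HOL-Probability.Probability"
begin

definition Sd :: "nat \<Rightarrow> real \<Rightarrow> real" where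
  "Sd d x = (x + real d) / 3"

definition words_upto :: "nat \<Rightarrow> nat list set" where
  "words_upto m = {u. length u \<le> m \<and> set u \<subseteq> {0, 2}}"

definition words_of_len :: "nat \<Rightarrow> nat list set" where
  "words_of_len n = {u. length u = n \<and> set u \<subseteq> {0, 2}}"

definition Sw :: "nat list \<Rightarrow> real \<Rightarrow> real" where
  "Sw w = foldr (\<lambda>d f. Sd d \<circ> f) w id"

definition Cantor :: "real set" where
  "Cantor = (\<Inter>n. \<Union>w\<in>words_of_len n. Sw w ` {0..1})"

definition Cw :: "nat list \<Rightarrow> real set" where
  "Cw w = Sw w ` Cantor"

definition is_mu :: "real \<Rightarrow> real measure \<Rightarrow> bool" where
  "is_mu p M \<longleftrightarrow> prob_space M \<and> space M = {0..1} \<and>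
     sets M = sets (restrict_space borel {0..1}) \<and>
     (\<forall>A\<in>sets M. emeasure M A =
        ennreal p * emeasure M (Sd 0 -` A \<inter> {0..1})
        + ennreal (1 - p) * emeasure M (Sd 2 -` A \<inter> {0..1}))"

definition mu :: "real \<Rightarrow> real measure" where
  "mu p = (THE M. is_mu p M)"

definition L2 :: "real \<Rightarrow> (real \<Rightarrow> complex) set" where
  "L2 p = {f. f \<in> borel_measurable (mu p) \<and> integrable (mu p) (\<lambda>x. (cmod (f x))^2)}"

definition L2norm :: "real \<Rightarrow> (real \<Rightarrow> complex) \<Rightarrow> real" where
  "L2norm p f = sqrt (\<integral>x. (cmod (f x))^2 \<partial>(mu p))"

definition inner_mu :: "real \<Rightarrow> (real \<Rightarrow> complex) \<Rightarrow> (real \<Rightarrow> complex) \<Rightarrow> complex" where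
  "inner_mu p f g = (\<integral>x. cnj (f x) * g x \<partial>(mu p))"

definition phi :: "real \<Rightarrow> complex" where
  "phi = indicator Cantor"

definition Km :: "real \<Rightarrow> nat \<Rightarrow> (real \<Rightarrow> complex) \<Rightarrow> real \<Rightarrow> complex" where
  "Km p m f x = (\<Sum>u\<in>words_upto m. inner_mu p (indicator (Cw u)) f * indicator (Cw u) x)"

text \<open>K_infinity as the limit of K_m (taken pointwise; it agrees a.e. with the
  operator-norm limit on L^2(mu_p)).\<close>
definition Kinf :: "real \<Rightarrow> (real \<Rightarrow> complex) \<Rightarrow> real \<Rightarrow> complex" where
  "Kinf p f x = lim (\<lambda>m. Km p m f x)"

definition Kinf_norm :: "real \<Rightarrow> real" where
  "Kinf_norm p = Sup {L2norm p (Kinf p f) | f. f \<in> L2 p \<and> L2norm p f \<le> 1}"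

definition moment :: "real \<Rightarrow> nat \<Rightarrow> complex" where
  "moment p n = inner_mu p phi ((Kinf p ^^ n) phi)"

text \<open>m(z) = <phi, (zI - K_inf)^{-1} phi>: the value <phi,g> for the (a.e. unique)
  g in L^2 solving z g - K_inf g = phi.\<close>
definition mfun :: "real \<Rightarrow> complex \<Rightarrow> complex" where
  "mfun p z = (THE c. \<exists>g\<in>L2 p. (AE x in mu p. z * g x - Kinf p g x = phi x)
                                 \<and> c = inner_mu p phi g)"

text \<open>A polynomial is a finite list of monomials (c, e, es) standing for
  c * p^e * prod_i X_i^(es!i).  It has variables among p, X_0..X_{n-1}
  iff every exponent list es has length n.\<close>
type_synonym ratpoly = "(rat \<times> nat \<times> nat list) list"

definition ratpoly_vars :: "nat \<Rightarrow> ratpoly \<Rightarrow> bool" where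
  "ratpoly_vars n P \<longleftrightarrow> (\<forall>(c, e, es)\<in>set P. length es = n)"

definition ratpoly_eval :: "ratpoly \<Rightarrow> 'a::field_char_0 \<Rightarrow> (nat \<Rightarrow> 'a) \<Rightarrow> 'a" where
  "ratpoly_eval P p X =
     (\<Sum>(c, e, es)\<leftarrow>P. of_rat c * p ^ e * (\<Prod>i<length es. X i ^ (es ! i)))"

end

theory Submission
  imports Defs
begin

text \<open>
  The measure \<open>\<mu>\<^sub>p\<close> is the law of \<open>\<Sum>\<^sub>i d\<^sub>i 3\<^sup>-\<^sup>i\<^sup>-\<^sup>1\<close> for independent digits \<open>d\<^sub>i \<in> {0, 2}\<close> of
  weights \<open>p, 1 - p\<close>; it is unique because the self-similarity equation contracts distribution
  functions by \<open>max p (1 - p)\<close>.  The level-\<open>n\<close> part of \<open>K\<^sub>\<infinity>\<close> is constant on each cylinder of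
  length \<open>n\<close>, with value bounded by \<open>\<mu>\<^sub>p(C\<^sub>w)\<^sup>1\<^sup>/\<^sup>2 \<parallel>f\<parallel> \<le> max(p, 1 - p)\<^sup>n\<^sup>/\<^sup>2 \<parallel>f\<parallel>\<close>, so \<open>K\<^sub>\<infinity>\<close> maps
  \<open>L\<^sup>2\<close> boundedly into bounded functions and the Neumann series
  \<open>\<Sum>\<^sub>n z\<^sup>-\<^sup>n\<^sup>-\<^sup>1 K\<^sub>\<infinity>\<^sup>n \<phi>\<close> solves \<open>(z - K\<^sub>\<infinity>) g = \<phi>\<close> for \<open>|z| > \<parallel>K\<^sub>\<infinity>\<parallel>\<close>, which gives the
  expansion of \<open>m(z)\<close>.

  Self-similarity of \<open>K\<^sub>\<infinity>\<close>: on \<open>S\<^sub>d(C)\<close> all levels but the zeroth reproduce \<open>K\<^sub>\<infinity>\<close>, so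
  \<open>(K\<^sub>\<infinity>f)(S\<^sub>d x) = \<langle>\<phi>, f\<rangle> + w\<^sub>d (K\<^sub>\<infinity>(f \<circ> S\<^sub>d))(x)\<close> on \<open>C\<close>, with \<open>w\<^sub>0 = p, w\<^sub>2 = 1 - p\<close>.  Iterating
  and integrating against \<open>\<mu>\<^sub>p = p \<mu>\<^sub>p\<circ>S\<^sub>0\<^sup>-\<^sup>1 + (1 - p) \<mu>\<^sub>p\<circ>S\<^sub>2\<^sup>-\<^sup>1\<close> yields
  \<open>\<mu>\<^sub>n = \<sigma>\<^sub>n \<mu>\<^sub>n + \<Sum>\<^sub>j\<^sub><\<^sub>n \<sigma>\<^sub>n\<^sub>-\<^sub>1\<^sub>-\<^sub>j \<mu>\<^sub>j \<mu>\<^sub>n\<^sub>-\<^sub>1\<^sub>-\<^sub>j\<close> with \<open>\<sigma>\<^sub>k = p\<^sup>k\<^sup>+\<^sup>1 + (1 - p)\<^sup>k\<^sup>+\<^sup>1\<close>.  This recursion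
  gives the polynomials \<open>P\<^sub>n\<close> and the first moments; in generating-function form, with
  \<open>a = m(z/p)\<close> and \<open>b = m(z/(1 - p))\<close>, it reads \<open>m = (a + b)(1 + m)\<close>, which is the functional
  equation.
\<close>

section \<open>Existence and uniqueness of the self-similar measure\<close>

abbreviation unit_borel :: "real measure" where
  "unit_borel \<equiv> restrict_space borel {0..1}"

lemma sets_unit_borel_iff: "A \<in> sets unit_borel \<longleftrightarrow> A \<subseteq> {0..1} \<and> A \<in> sets borel"
  by (rule sets_restrict_space_iff) auto

lemma Sd_borel_measurable [measurable]: "Sd d \<in> borel_measurable borel"
  unfolding Sd_def by measurable

lemma Sd_vimage_in_unit_borel: "A \<in> sets unit_borel \<Longrightarrow> Sd d -` A \<inter> {0..1} \<in> sets unit_borel"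
  using measurable_sets_borel[OF Sd_borel_measurable] by (auto simp: sets_unit_borel_iff)

definition digit :: "bool \<Rightarrow> nat" where
  "digit b = (if b then 2 else 0)"

definition cantor_coding :: "bool stream \<Rightarrow> real" where
  "cantor_coding w = (\<Sum>i. real (digit (w !! i)) / 3 ^ Suc i)"

lemma sums_two_div_three_powers: "(\<lambda>i. 2 / (3::real) ^ Suc i) sums 1"
proof -
  have "(\<lambda>i. (2/3) * (1/(3::real)) ^ i) sums ((2/3) * (1 / (1 - 1/3)))"
    by (intro sums_mult geometric_sums) auto
  then show ?thesis
    by (simp add: power_divide field_simps)
qed

lemma summable_cantor_coding: "summable (\<lambda>i. real (digit (w !! i)) / 3 ^ Suc i)"
  by (rule summable_comparison_test'[OF sums_summable[OF sums_two_div_three_powers], of 0])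
     (auto simp: digit_def)

lemma cantor_coding_in_unit: "cantor_coding w \<in> {0..1}"
  unfolding atLeastAtMost_iff
proof
  show "0 \<le> cantor_coding w"
    unfolding cantor_coding_def by (intro suminf_nonneg summable_cantor_coding) (auto simp: digit_def)
  have "cantor_coding w \<le> (\<Sum>i. 2 / (3::real) ^ Suc i)"
    unfolding cantor_coding_def
    by (intro suminf_le summable_cantor_coding sums_summable[OF sums_two_div_three_powers])
       (auto simp: digit_def divide_right_mono)
  then show "cantor_coding w \<le> 1"
    using sums_two_div_three_powers by (simp add: sums_iff)
qed

lemma cantor_coding_Stream: "cantor_coding (b ## w) = Sd (digit b) (cantor_coding w)"
proof -
  let ?f = "\<lambda>i. real (digit ((b ## w) !! i)) / 3 ^ Suc i"
  have "(\<Sum>n. ?f (Suc n)) = cantor_coding w / 3"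
    unfolding cantor_coding_def
    by (subst suminf_divide[symmetric, OF summable_cantor_coding]) (simp add: field_simps)
  then have "suminf ?f = real (digit b) / 3 + cantor_coding w / 3"
    using suminf_split_head[OF summable_cantor_coding[of "b ## w"]] by simp
  then show ?thesis
    by (simp add: cantor_coding_def Sd_def add_divide_distrib)
qed

text \<open>A stream value \<^term>\<open>True\<close> stands for the digit 2, which has weight \<open>1 - p\<close>.\<close>
definition bernoulli_streams :: "real \<Rightarrow> bool stream measure" where
  "bernoulli_streams p = stream_space (measure_pmf (bernoulli_pmf (1 - p)))"

definition coding_distr :: "real \<Rightarrow> real measure" where
  "coding_distr p = distr (bernoulli_streams p) unit_borel cantor_coding"

lemma cantor_coding_measurable [measurable]:
  "cantor_coding \<in> measurable (bernoulli_streams p) unit_borel"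
proof (rule measurable_restrict_space2)
  show "cantor_coding \<in> borel_measurable (bernoulli_streams p)"
    unfolding bernoulli_streams_def cantor_coding_def by measurable
qed (use cantor_coding_in_unit in auto)

lemma prob_space_bernoulli_streams: "prob_space (bernoulli_streams p)"
  unfolding bernoulli_streams_def
  by (rule prob_space.prob_space_stream_space) (rule prob_space_measure_pmf)

lemma emeasure_coding_distr:
  "A \<in> sets unit_borel \<Longrightarrow>
     emeasure (coding_distr p) A = (\<integral>\<^sup>+w. indicator A (cantor_coding w) \<partial>bernoulli_streams p)"
proof -
  assume A: "A \<in> sets unit_borel"
  then have "emeasure (coding_distr p) A = (\<integral>\<^sup>+y. indicator A y \<partial>coding_distr p)"
    by (simp add: coding_distr_def)
  also have "\<dots> = (\<integral>\<^sup>+w. indicator A (cantor_coding w) \<partial>bernoulli_streams p)"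
    unfolding coding_distr_def using A by (subst nn_integral_distr) auto
  finally show ?thesis .
qed

lemma is_mu_coding_distr:
  assumes p: "0 < p" "p < 1"
  shows "is_mu p (coding_distr p)"
  unfolding is_mu_def
proof (intro conjI ballI)
  show "prob_space (coding_distr p)"
    unfolding coding_distr_def by (intro prob_space.prob_space_distr prob_space_bernoulli_streams) simp
  show "space (coding_distr p) = {0..1}" "sets (coding_distr p) = sets unit_borel"
    by (simp_all add: coding_distr_def space_restrict_space)
  fix A assume "A \<in> sets (coding_distr p)"
  then have A: "A \<in> sets unit_borel"
    by (simp add: coding_distr_def)
  have ind: "indicator A (Sd d (cantor_coding w)) =
      (indicator (Sd d -` A \<inter> {0..1}) (cantor_coding w) :: ennreal)" for d w
    using cantor_coding_in_unit[of w] by (auto split: split_indicator)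
  have "emeasure (coding_distr p) A = (\<integral>\<^sup>+w. indicator A (cantor_coding w) \<partial>bernoulli_streams p)"
    by (rule emeasure_coding_distr[OF A])
  also have "\<dots> = (\<integral>\<^sup>+b. (\<integral>\<^sup>+w. indicator A (cantor_coding (b ## w)) \<partial>bernoulli_streams p)
                      \<partial>measure_pmf (bernoulli_pmf (1 - p)))"
    unfolding bernoulli_streams_def
    by (rule prob_space.nn_integral_stream_space[OF prob_space_measure_pmf])
       (use A cantor_coding_measurable[unfolded bernoulli_streams_def] in measurable)
  also have "\<dots> = (\<integral>\<^sup>+b. emeasure (coding_distr p) (Sd (digit b) -` A \<inter> {0..1})
                      \<partial>measure_pmf (bernoulli_pmf (1 - p)))"
    by (intro nn_integral_cong)
       (simp add: cantor_coding_Stream ind emeasure_coding_distr[OF Sd_vimage_in_unit_borel[OF A]])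
  also have "\<dots> = ennreal p * emeasure (coding_distr p) (Sd 0 -` A \<inter> {0..1})
                 + ennreal (1 - p) * emeasure (coding_distr p) (Sd 2 -` A \<inter> {0..1})"
    using p by (simp add: digit_def mult.commute add.commute)
  finally show "emeasure (coding_distr p) A = ennreal p * emeasure (coding_distr p) (Sd 0 -` A \<inter> {0..1})
                 + ennreal (1 - p) * emeasure (coding_distr p) (Sd 2 -` A \<inter> {0..1})" .
qed

lemma is_mu_measure_eq:
  assumes M: "is_mu p M" and p: "0 < p" "p < 1" and A: "A \<in> sets unit_borel"
  shows "measure M A = p * measure M (Sd 0 -` A \<inter> {0..1}) + (1 - p) * measure M (Sd 2 -` A \<inter> {0..1})"
proof -
  interpret prob_space M
    using M by (simp add: is_mu_def)
  have "emeasure M A = ennreal p * emeasure M (Sd 0 -` A \<inter> {0..1})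
                       + ennreal (1 - p) * emeasure M (Sd 2 -` A \<inter> {0..1})"
    using M A by (simp add: is_mu_def)
  then have "ennreal (measure M A) = ennreal (p * measure M (Sd 0 -` A \<inter> {0..1})
                                         + (1 - p) * measure M (Sd 2 -` A \<inter> {0..1}))"
    using p by (simp add: emeasure_eq_measure ennreal_mult ennreal_plus[symmetric])
  then show ?thesis
    using p by (subst (asm) ennreal_inj) auto
qed

definition unit_cdf :: "real measure \<Rightarrow> real \<Rightarrow> real" where
  "unit_cdf M t = measure M ({0..1} \<inter> {..t})"

lemma is_mu_unit_cdf_rec:
  assumes "is_mu p M" "0 < p" "p < 1"
  shows "unit_cdf M t = p * unit_cdf M (3 * t) + (1 - p) * unit_cdf M (3 * t - 2)"
proof -
  have "{0..1} \<inter> {..t} \<in> sets unit_borel"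
    by (auto simp: sets_unit_borel_iff)
  moreover have "Sd 0 -` ({0..1} \<inter> {..t}) \<inter> {0..1} = {0..1} \<inter> {..3*t}"
    and "Sd 2 -` ({0..1} \<inter> {..t}) \<inter> {0..1} = {0..1} \<inter> {..3*t-2}"
    by (auto simp: Sd_def)
  ultimately show ?thesis
    using is_mu_measure_eq[OF assms] unfolding unit_cdf_def by simp
qed

lemma is_mu_unit_cdf_outside:
  assumes "is_mu p M" and "t < 0 \<or> 1 \<le> t"
  shows "unit_cdf M t = (if t < 0 then 0 else 1)"
proof -
  interpret prob_space M
    using assms(1) by (simp add: is_mu_def)
  have "1 \<le> t \<Longrightarrow> {0..1} \<inter> {..t} = space M"
    using assms(1) by (auto simp: is_mu_def)
  then show ?thesis
    using assms(2) by (auto simp: unit_cdf_def prob_space)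
qed

lemma is_mu_unit_cdf_unique:
  assumes M1: "is_mu p M1" and M2: "is_mu p M2" and p: "0 < p" "p < 1"
  shows "unit_cdf M1 t = unit_cdf M2 t"
proof -
  define D where "D t = unit_cdf M1 t - unit_cdf M2 t" for t
  define c where "c = max p (1 - p)"
  have c: "c < 1" "p \<le> c" "1 - p \<le> c"
    using p by (auto simp: c_def)
  have D_outside: "D t = 0" if "t < 0 \<or> 1 \<le> t" for t
    using that is_mu_unit_cdf_outside[OF M1] is_mu_unit_cdf_outside[OF M2] by (simp add: D_def)
  have D_rec: "D t = p * D (3*t) + (1 - p) * D (3*t - 2)" for t
    using is_mu_unit_cdf_rec[OF M1 p, of t] is_mu_unit_cdf_rec[OF M2 p, of t]
    by (simp add: D_def algebra_simps)
  have D_bound: "\<bar>D t\<bar> \<le> c ^ n" for n t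
  proof (induction n arbitrary: t)
    case 0
    interpret P1: prob_space M1 using M1 by (simp add: is_mu_def)
    interpret P2: prob_space M2 using M2 by (simp add: is_mu_def)
    show ?case
      using P1.prob_le_1[of "{0..1} \<inter> {..t}"] P2.prob_le_1[of "{0..1} \<inter> {..t}"]
        measure_nonneg[of M1 "{0..1} \<inter> {..t}"] measure_nonneg[of M2 "{0..1} \<inter> {..t}"]
      unfolding D_def unit_cdf_def power_0 abs_le_iff by linarith
  next
    case (Suc n)
    consider "t < 0 \<or> 1 \<le> t" | "0 \<le> t" "t < 1/3" | "1/3 \<le> t" "t < 1"
      by linarith
    then show ?case
    proof cases
      case 1
      then show ?thesis using D_outside c by simp
    next
      case 2
      then have "\<bar>D t\<bar> = p * \<bar>D (3*t)\<bar>"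
        using D_rec[of t] D_outside[of "3*t-2"] p by (simp add: abs_mult)
      also have "\<dots> \<le> c * c ^ n"
        using Suc.IH[of "3*t"] c p by (intro mult_mono) auto
      finally show ?thesis by simp
    next
      case 3
      then have "\<bar>D t\<bar> = (1 - p) * \<bar>D (3*t - 2)\<bar>"
        using D_rec[of t] D_outside[of "3*t"] p by (simp add: abs_mult)
      also have "\<dots> \<le> c * c ^ n"
        using Suc.IH[of "3*t-2"] c p by (intro mult_mono) auto
      finally show ?thesis by simp
    qed
  qed
  have "D t = 0"
  proof (rule ccontr)
    assume "D t \<noteq> 0"
    then obtain n where "c ^ n < \<bar>D t\<bar>"
      using real_arch_pow_inv[of "\<bar>D t\<bar>" c] c p by auto
    with D_bound[of t n] show False by simp
  qed
  then show ?thesis by (simp add: D_def)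
qed

lemma is_mu_unique:
  assumes M1: "is_mu p M1" and M2: "is_mu p M2" and p: "0 < p" "p < 1"
  shows "M1 = M2"
proof -
  have sets_eq: "sets M1 = sets unit_borel" "sets M2 = sets unit_borel"
    using M1 M2 by (auto simp: is_mu_def)
  define N where "N M = distr M borel (\<lambda>x. x)" for M :: "real measure"
  have id_measurable: "(\<lambda>x. x) \<in> borel_measurable M" if "sets M = sets unit_borel" for M :: "real measure"
    using measurable_restrict_space1[OF measurable_ident_sets[OF refl], of borel "{0..1::real}"]
    by (simp add: measurable_cong_sets[OF that refl] id_def)
  have real_distr: "real_distribution (N M)" if "is_mu p M" for M
  proof -
    interpret prob_space M using that by (simp add: is_mu_def)
    show ?thesis
      unfolding N_def real_distribution_def real_distribution_axioms_def
      using prob_space_distr[OF id_measurable] that by (simp add: is_mu_def)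
  qed
  have emeasure_N: "emeasure (N M) A = emeasure M ({0..1} \<inter> A)" if "is_mu p M" "A \<in> sets borel" for M A
    using that id_measurable[of M] unfolding N_def
    by (subst emeasure_distr) (auto simp: is_mu_def Int_commute)
  have "cdf (N M) t = unit_cdf M t" if "is_mu p M" for M t
    using emeasure_N[OF that, of "{..t}"] that
    by (simp add: cdf_def unit_cdf_def measure_def)
  then have "cdf (N M1) = cdf (N M2)"
    using is_mu_unit_cdf_unique[OF M1 M2 p] M1 M2 by auto
  then have N_eq: "N M1 = N M2"
    by (rule cdf_unique[OF real_distr[OF M1] real_distr[OF M2]])
  show ?thesis
  proof (rule measure_eqI)
    show "sets M1 = sets M2"
      using sets_eq by simp
    fix A assume "A \<in> sets M1"
    then have "A \<in> sets borel" "{0..1} \<inter> A = A"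
      using sets_eq by (auto simp: sets_unit_borel_iff)
    then show "emeasure M1 A = emeasure M2 A"
      using emeasure_N[OF M1] emeasure_N[OF M2] N_eq by metis
  qed
qed

lemma is_mu_mu:
  assumes "0 < p" "p < 1"
  shows "is_mu p (mu p)"
  unfolding mu_def
  by (rule theI[where P = "is_mu p", OF is_mu_coding_distr[OF assms]])
     (use is_mu_coding_distr[OF assms] is_mu_unique[OF _ _ assms] in blast)

lemma Sw_Nil [simp]: "Sw [] = id"
  by (simp add: Sw_def)

lemma Sw_Cons [simp]: "Sw (d # u) = Sd d \<circ> Sw u"
  by (simp add: Sw_def)

lemma words_of_len_Suc_iff:
  "u \<in> words_of_len (Suc n) \<longleftrightarrow> (\<exists>d v. u = d # v \<and> d \<in> {0,2} \<and> v \<in> words_of_len n)"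
  by (cases u) (auto simp: words_of_len_def)

lemma Cons_in_words_of_len: "d \<in> {0,2} \<Longrightarrow> v \<in> words_of_len n \<Longrightarrow> d # v \<in> words_of_len (Suc n)"
  by (simp add: words_of_len_Suc_iff)

lemma finite_words_of_len: "finite (words_of_len n)"
proof -
  have "words_of_len n = {xs. set xs \<subseteq> {0,2::nat} \<and> length xs = n}"
    by (auto simp: words_of_len_def)
  then show ?thesis
    by (simp add: finite_lists_length_eq)
qed

lemma words_upto_eq_UN: "words_upto m = (\<Union>n\<le>m. words_of_len n)"
  by (auto simp: words_upto_def words_of_len_def)

lemma Sd_in_unit: "d \<in> {0,2} \<Longrightarrow> y \<in> {0..1} \<Longrightarrow> Sd d y \<in> {0..1}"
  by (auto simp: Sd_def)

lemma Sd_eq_Sd_iff: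
  "d \<in> {0,2} \<Longrightarrow> e \<in> {0,2} \<Longrightarrow> a \<in> {0..1} \<Longrightarrow> b \<in> {0..1} \<Longrightarrow> Sd d a = Sd e b \<longleftrightarrow> d = e \<and> a = b"
  by (auto simp: Sd_def)

lemma inj_Sd: "inj (Sd d)"
  by (rule injI) (simp add: Sd_def)

lemma Sw_in_unit: "set u \<subseteq> {0,2} \<Longrightarrow> y \<in> {0..1} \<Longrightarrow> Sw u y \<in> {0..1}"
  by (induction u) (auto simp: Sd_def)

lemma Sw_eq_imp_eq:
  assumes "length u = length v" "set u \<subseteq> {0,2}" "set v \<subseteq> {0,2}" "a \<in> {0..1}" "b \<in> {0..1}"
    and "Sw u a = Sw v b"
  shows "u = v"
  using assms
proof (induction u arbitrary: v)
  case (Cons d u)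
  then obtain e v' where v: "v = e # v'"
    by (cases v) auto
  have "d = e \<and> Sw u a = Sw v' b"
    using Cons.prems v Sw_in_unit[of u a] Sw_in_unit[of v' b] by (subst Sd_eq_Sd_iff[symmetric]) auto
  then show ?case
    using Cons v by auto
qed simp

lemma continuous_on_Sw: "continuous_on S (Sw u)"
proof (induction u arbitrary: S)
  case (Cons d u)
  have Sd_cont: "continuous_on T (Sd d)" for T
    unfolding Sd_def by (intro continuous_intros) auto
  show ?case
    using continuous_on_compose[OF Cons.IH Sd_cont] by simp
qed (simp add: continuous_on_id)

definition cantor_stage :: "nat \<Rightarrow> real set" where
  "cantor_stage n = (\<Union>w\<in>words_of_len n. Sw w ` {0..1})"

lemma Cantor_eq_Inter_stages: "Cantor = (\<Inter>n. cantor_stage n)"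
  by (simp add: Cantor_def cantor_stage_def)

lemma cantor_stage_0: "cantor_stage 0 = {0..1}"
  by (simp add: cantor_stage_def words_of_len_def)

lemma cantor_stage_subset_unit: "cantor_stage n \<subseteq> {0..1}"
  unfolding cantor_stage_def words_of_len_def using Sw_in_unit by blast

lemma compact_cantor_stage: "compact (cantor_stage n)"
  unfolding cantor_stage_def
  by (intro compact_UN finite_words_of_len compact_continuous_image continuous_on_Sw compact_Icc)

lemma cantor_stage_in_unit_borel: "cantor_stage n \<in> sets unit_borel"
  using cantor_stage_subset_unit borel_closed[OF compact_imp_closed[OF compact_cantor_stage]]
  by (auto simp: sets_unit_borel_iff)

lemma Sd_in_cantor_stage: "d \<in> {0,2} \<Longrightarrow> x \<in> cantor_stage n \<Longrightarrow> Sd d x \<in> cantor_stage (Suc n)"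
  unfolding cantor_stage_def by (force intro: Cons_in_words_of_len)

lemma Cantor_subset_unit: "Cantor \<subseteq> {0..1}"
  using cantor_stage_0 Cantor_eq_Inter_stages by auto

lemma compact_Cantor: "compact Cantor"
  unfolding Cantor_eq_Inter_stages by (rule compact_Inter) (auto intro: compact_cantor_stage)

lemma Sd_in_Cantor: "d \<in> {0,2} \<Longrightarrow> x \<in> Cantor \<Longrightarrow> Sd d x \<in> Cantor"
proof -
  assume d: "d \<in> {0,2}" and x: "x \<in> Cantor"
  have "Sd d x \<in> cantor_stage n" for n
  proof (cases n)
    case 0
    then show ?thesis
      using Sd_in_unit[OF d] x Cantor_subset_unit cantor_stage_0 by auto
  next
    case (Suc m)
    have "x \<in> cantor_stage m"
      using x Cantor_eq_Inter_stages by auto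
    then show ?thesis
      using Sd_in_cantor_stage[OF d] Suc by simp
  qed
  then show ?thesis
    using Cantor_eq_Inter_stages by auto
qed

lemma Cw_Nil [simp]: "Cw [] = Cantor"
  by (simp add: Cw_def)

lemma Cw_Cons: "Cw (d # u) = Sd d ` Cw u"
  by (simp add: Cw_def image_comp)

lemma Cw_subset_Sw_unit: "Cw u \<subseteq> Sw u ` {0..1}"
  using Cantor_subset_unit by (auto simp: Cw_def)

lemma Cw_subset_unit: "set u \<subseteq> {0,2} \<Longrightarrow> Cw u \<subseteq> {0..1}"
  using Cw_subset_Sw_unit Sw_in_unit by blast

lemma Cw_in_unit_borel: "set u \<subseteq> {0,2} \<Longrightarrow> Cw u \<in> sets unit_borel"
proof -
  have "compact (Cw u)"
    unfolding Cw_def by (intro compact_continuous_image continuous_on_Sw compact_Cantor)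
  moreover assume "set u \<subseteq> {0,2}"
  ultimately show ?thesis
    using Cw_subset_unit borel_closed[OF compact_imp_closed] by (auto simp: sets_unit_borel_iff)
qed

lemma Cantor_in_unit_borel: "Cantor \<in> sets unit_borel"
  using Cw_in_unit_borel[of "[]"] by simp

lemma Cw_disjoint:
  assumes "u \<in> words_of_len n" "v \<in> words_of_len n" "x \<in> Cw u" "x \<in> Cw v"
  shows "u = v"
proof -
  obtain a b where "a \<in> {0..1}" "b \<in> {0..1}" "x = Sw u a" "x = Sw v b"
    using assms(3,4) Cw_subset_Sw_unit by blast
  then show "u = v"
    using assms(1,2) by (intro Sw_eq_imp_eq[of u v a b]) (auto simp: words_of_len_def)
qed

lemma Sd_notin_Cw_Cons:
  assumes "d \<in> {0,2}" "e \<in> {0,2}" "d \<noteq> e" "set v \<subseteq> {0,2}" "y \<in> {0..1}"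
  shows "Sd e y \<notin> Cw (d # v)"
proof
  assume "Sd e y \<in> Cw (d # v)"
  then obtain x where x: "x \<in> Cw v" "Sd e y = Sd d x"
    by (auto simp: Cw_Cons)
  then have "x \<in> {0..1}"
    using Cw_subset_unit[OF assms(4)] by auto
  then show False
    using Sd_eq_Sd_iff[of e d y x] assms x(2) by simp
qed

definition digit_weight :: "real \<Rightarrow> nat \<Rightarrow> real" where
  "digit_weight p d = (if d = 0 then p else 1 - p)"

locale cantor_mu =
  fixes p :: real
  assumes p_pos: "0 < p" and p_less_1: "p < 1"
begin

abbreviation "M \<equiv> mu p"

lemma is_mu_M: "is_mu p M"
  using is_mu_mu p_pos p_less_1 by blast

sublocale prob_space M
  using is_mu_M by (simp add: is_mu_def)

lemma sets_M [measurable_cong]: "sets M = sets unit_borel"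
  using is_mu_M by (simp add: is_mu_def)

lemma space_M: "space M = {0..1}"
  using is_mu_M by (simp add: is_mu_def)

definition wmax :: real where
  "wmax = max p (1 - p)"

lemma wmax_bounds: "0 < wmax" "wmax < 1" "p \<le> wmax" "1 - p \<le> wmax"
  using p_pos p_less_1 by (auto simp: wmax_def)

lemma digit_weight_bounds: "d \<in> {0,2} \<Longrightarrow> 0 < digit_weight p d \<and> digit_weight p d \<le> wmax"
  using p_pos p_less_1 wmax_bounds by (auto simp: digit_weight_def)

lemma measure_Sd_image:
  assumes d: "d \<in> {0,2}" and A: "A \<in> sets unit_borel" and SA: "Sd d ` A \<in> sets unit_borel"
  shows "measure M (Sd d ` A) = digit_weight p d * measure M A"
proof -
  have A_unit: "A \<subseteq> {0..1}"
    using A by (simp add: sets_unit_borel_iff)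
  have same: "Sd d -` (Sd d ` A) \<inter> {0..1} = A"
    using A_unit by (auto dest: injD[OF inj_Sd])
  have other: "Sd e -` (Sd d ` A) \<inter> {0..1} = {}" if "e \<in> {0,2}" "e \<noteq> d" for e
    using Sd_eq_Sd_iff[OF d that(1)] A_unit that(2) by fastforce
  show ?thesis
    using d is_mu_measure_eq[OF is_mu_M p_pos p_less_1 SA] same other[of 0] other[of 2]
    by (auto simp: digit_weight_def)
qed

lemma measure_Cw_le: "set u \<subseteq> {0,2} \<Longrightarrow> measure M (Cw u) \<le> wmax ^ length u"
proof (induction u)
  case (Cons d u)
  then have d: "d \<in> {0,2}" and u: "set u \<subseteq> {0,2}"
    by auto
  have "measure M (Cw (d # u)) = digit_weight p d * measure M (Cw u)"
    unfolding Cw_Cons using Cw_in_unit_borel[OF u] Cw_in_unit_borel[of "d # u"] d u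
    by (intro measure_Sd_image) (auto simp: Cw_Cons)
  also have "\<dots> \<le> wmax * wmax ^ length u"
    using digit_weight_bounds[OF d] Cons.IH[OF u] by (intro mult_mono) auto
  finally show ?case by simp
qed simp

lemma measure_cantor_stage: "measure M (cantor_stage n) = 1"
proof (induction n)
  case 0
  then show ?case
    using prob_space space_M by (simp add: cantor_stage_0)
next
  case (Suc n)
  have preimage: "measure M (Sd d -` cantor_stage (Suc n) \<inter> {0..1}) = 1" if d: "d \<in> {0,2}" for d
  proof (rule antisym)
    have "cantor_stage n \<subseteq> Sd d -` cantor_stage (Suc n) \<inter> {0..1}"
      using Sd_in_cantor_stage[OF d] cantor_stage_subset_unit by auto
    then have "measure M (cantor_stage n) \<le> measure M (Sd d -` cantor_stage (Suc n) \<inter> {0..1})"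
      using cantor_stage_in_unit_borel Sd_vimage_in_unit_borel[OF cantor_stage_in_unit_borel]
      by (intro finite_measure_mono) (auto simp: sets_M)
    then show "1 \<le> measure M (Sd d -` cantor_stage (Suc n) \<inter> {0..1})"
      using Suc by simp
  qed (rule prob_le_1)
  show ?case
    using is_mu_measure_eq[OF is_mu_M p_pos p_less_1 cantor_stage_in_unit_borel] preimage[of 0] preimage[of 2]
    by simp
qed

lemma AE_in_Cantor: "AE x in M. x \<in> Cantor"
proof -
  have "AE x in M. x \<in> cantor_stage n" for n
    using measure_cantor_stage[of n] cantor_stage_in_unit_borel[of n]
    by (subst AE_in_set_eq_1) (auto simp: sets_M)
  then show ?thesis
    by (simp add: Cantor_eq_Inter_stages AE_all_countable)
qed

lemma Cantor_in_sets_M: "Cantor \<in> sets M"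
  using Cantor_in_unit_borel sets_M by simp

lemma measure_Cantor: "measure M Cantor = 1"
  using AE_in_Cantor Cantor_in_sets_M by (subst AE_in_set_eq_1[symmetric]) auto

lemma Cw_in_sets_M: "u \<in> words_of_len n \<Longrightarrow> Cw u \<in> sets M"
  using Cw_in_unit_borel sets_M by (auto simp: words_of_len_def)

lemma borel_measurable_ident_M: "(\<lambda>x. x) \<in> borel_measurable M"
  using measurable_restrict_space1[OF measurable_ident_sets[OF refl], of borel "{0..1::real}"]
  by (simp add: measurable_cong_sets[OF sets_M refl] id_def)

lemma Sd_measurable [measurable]: "d \<in> {0,2} \<Longrightarrow> Sd d \<in> measurable M M"
proof -
  assume d: "d \<in> {0,2}"
  have "Sd d \<in> measurable M unit_borel"
  proof (rule measurable_restrict_space2)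
    show "Sd d \<in> space M \<rightarrow> {0..1}"
      using Sd_in_unit[OF d] by (auto simp: space_M)
    show "Sd d \<in> borel_measurable M"
      using measurable_compose[OF borel_measurable_ident_M Sd_borel_measurable] by simp
  qed
  then show ?thesis
    using measurable_cong_sets[OF refl sets_M] by metis
qed

abbreviation "digit_law \<equiv> measure_pmf (bernoulli_pmf (1 - p))"

definition apply_digit :: "bool \<times> real \<Rightarrow> real" where
  "apply_digit = (\<lambda>(b, x). Sd (digit b) x)"

lemma apply_digit_measurable [measurable]: "apply_digit \<in> measurable (digit_law \<Otimes>\<^sub>M M) M"
proof -
  have "(\<lambda>z. snd z) \<in> borel_measurable (digit_law \<Otimes>\<^sub>M M)"
    by (rule measurable_compose[OF measurable_snd borel_measurable_ident_M])
  moreover have "(\<lambda>z. real (digit (fst z))) \<in> borel_measurable (digit_law \<Otimes>\<^sub>M M)"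
    by (rule measurable_compose[OF measurable_fst]) simp
  ultimately have "apply_digit \<in> borel_measurable (digit_law \<Otimes>\<^sub>M M)"
    unfolding apply_digit_def Sd_def case_prod_beta'
    by (intro borel_measurable_divide borel_measurable_add) auto
  then have "apply_digit \<in> measurable (digit_law \<Otimes>\<^sub>M M) unit_borel"
    by (rule measurable_restrict_space2[rotated])
       (auto simp: apply_digit_def space_pair_measure space_M digit_def Sd_def)
  then show ?thesis
    using measurable_cong_sets[OF refl sets_M] by metis
qed

interpretation digit_pair: pair_sigma_finite digit_law M
  by (intro pair_sigma_finite.intro)
     (auto intro: prob_space_imp_sigma_finite prob_space_measure_pmf prob_space_axioms)

lemma M_eq_distr_apply_digit: "M = distr (digit_law \<Otimes>\<^sub>M M) M apply_digit"
proof (rule measure_eqI)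
  fix A assume A: "A \<in> sets M"
  have "emeasure (distr (digit_law \<Otimes>\<^sub>M M) M apply_digit) A
      = emeasure (digit_law \<Otimes>\<^sub>M M) (apply_digit -` A \<inter> space (digit_law \<Otimes>\<^sub>M M))"
    using A by (subst emeasure_distr) auto
  also have "\<dots> = (\<integral>\<^sup>+b. emeasure M (Pair b -` (apply_digit -` A \<inter> space (digit_law \<Otimes>\<^sub>M M))) \<partial>digit_law)"
    using A by (intro emeasure_pair_measure_alt) (auto intro: measurable_sets)
  also have "\<dots> = (\<integral>\<^sup>+b. emeasure M (Sd (digit b) -` A \<inter> {0..1}) \<partial>digit_law)"
    by (intro nn_integral_cong arg_cong[where f = "emeasure M"])
       (auto simp: apply_digit_def space_pair_measure space_M)
  also have "\<dots> = ennreal p * emeasure M (Sd 0 -` A \<inter> {0..1})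
                 + ennreal (1 - p) * emeasure M (Sd 2 -` A \<inter> {0..1})"
    using p_pos p_less_1 by (simp add: digit_def mult.commute add.commute)
  also have "\<dots> = emeasure M A"
    using is_mu_M A by (simp add: is_mu_def)
  finally show "emeasure M A = emeasure (distr (digit_law \<Otimes>\<^sub>M M) M apply_digit) A"
    by simp
qed simp

lemma integral_self_similar:
  fixes h :: "real \<Rightarrow> 'b::{banach,second_countable_topology}"
  assumes h: "integrable M h"
  shows "integrable M (\<lambda>x. h (Sd 0 x))" "integrable M (\<lambda>x. h (Sd 2 x))"
    and "(\<integral>x. h x \<partial>M) = p *\<^sub>R (\<integral>x. h (Sd 0 x) \<partial>M) + (1 - p) *\<^sub>R (\<integral>x. h (Sd 2 x) \<partial>M)"
proof -
  have h_measurable [measurable]: "h \<in> borel_measurable M"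
    using h by simp
  have int_pair: "integrable (digit_law \<Otimes>\<^sub>M M) (\<lambda>z. h (apply_digit z))"
    using h by (subst integrable_distr_eq[symmetric, OF apply_digit_measurable h_measurable])
               (simp add: M_eq_distr_apply_digit[symmetric])
  have "AE b in digit_law. integrable M (\<lambda>x. h (apply_digit (b, x)))"
    by (rule digit_pair.AE_integrable_fst'[OF int_pair])
  then have int_digit: "integrable M (\<lambda>x. h (Sd (digit b) x))" for b
    using p_pos p_less_1 by (simp add: AE_measure_pmf_iff apply_digit_def)
  show "integrable M (\<lambda>x. h (Sd 0 x))" "integrable M (\<lambda>x. h (Sd 2 x))"
    using int_digit[of False] int_digit[of True] by (simp_all add: digit_def)
  have "(\<integral>x. h x \<partial>M) = (\<integral>z. h (apply_digit z) \<partial>(digit_law \<Otimes>\<^sub>M M))"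
    by (subst M_eq_distr_apply_digit) (rule integral_distr; measurable)
  also have "\<dots> = (\<integral>b. (\<integral>x. h (apply_digit (b, x)) \<partial>M) \<partial>digit_law)"
    by (rule digit_pair.integral_fst'[OF int_pair, symmetric])
  also have "\<dots> = p *\<^sub>R (\<integral>x. h (Sd 0 x) \<partial>M) + (1 - p) *\<^sub>R (\<integral>x. h (Sd 2 x) \<partial>M)"
    using p_pos p_less_1
    by (subst integral_measure_pmf[of UNIV]) (auto simp: UNIV_bool apply_digit_def digit_def)
  finally show "(\<integral>x. h x \<partial>M) = p *\<^sub>R (\<integral>x. h (Sd 0 x) \<partial>M) + (1 - p) *\<^sub>R (\<integral>x. h (Sd 2 x) \<partial>M)" .
qed

end

section \<open>The operator \<open>K\<^sub>\<infinity>\<close> on \<open>L\<^sup>2(\<mu>\<^sub>p)\<close>\<close>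

lemma Cauchy_Schwarz_integral_nonneg:
  fixes g h :: "'a \<Rightarrow> real"
  assumes [measurable]: "g \<in> borel_measurable M" "h \<in> borel_measurable M"
    and ig: "integrable M (\<lambda>x. (g x)\<^sup>2)" and ih: "integrable M (\<lambda>x. (h x)\<^sup>2)"
    and igh: "integrable M (\<lambda>x. g x * h x)"
    and g0: "\<And>x. 0 \<le> g x" and h0: "\<And>x. 0 \<le> h x"
  shows "(\<integral>x. g x * h x \<partial>M)\<^sup>2 \<le> (\<integral>x. (g x)\<^sup>2 \<partial>M) * (\<integral>x. (h x)\<^sup>2 \<partial>M)"
proof -
  have nn_sq: "(\<integral>\<^sup>+x. ennreal (f x) ^ 2 \<partial>M) = ennreal (\<integral>x. (f x)\<^sup>2 \<partial>M)"
    if "integrable M (\<lambda>x. (f x)\<^sup>2)" "\<And>x. 0 \<le> f x" for f :: "'a \<Rightarrow> real"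
    using nn_integral_eq_integral[OF that(1)] that(2) by (simp add: ennreal_power)
  have "(\<integral>\<^sup>+x. ennreal (g x) * ennreal (h x) \<partial>M)\<^sup>2
        \<le> (\<integral>\<^sup>+x. ennreal (g x) ^ 2 \<partial>M) * (\<integral>\<^sup>+x. ennreal (h x) ^ 2 \<partial>M)"
    by (rule Cauchy_Schwarz_nn_integral) auto
  moreover have "(\<integral>\<^sup>+x. ennreal (g x) * ennreal (h x) \<partial>M) = ennreal (\<integral>x. g x * h x \<partial>M)"
    using g0 h0 by (simp add: ennreal_mult[symmetric] nn_integral_eq_integral[OF igh])
  moreover have nonneg: "0 \<le> (\<integral>x. (g x)\<^sup>2 \<partial>M)" "0 \<le> (\<integral>x. (h x)\<^sup>2 \<partial>M)" "0 \<le> (\<integral>x. g x * h x \<partial>M)"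
    using g0 h0 by (auto intro!: integral_nonneg_AE)
  ultimately have "ennreal ((\<integral>x. g x * h x \<partial>M)\<^sup>2) \<le> ennreal ((\<integral>x. (g x)\<^sup>2 \<partial>M) * (\<integral>x. (h x)\<^sup>2 \<partial>M))"
    by (simp add: nn_sq[OF ig g0] nn_sq[OF ih h0] ennreal_power ennreal_mult)
  then show ?thesis
    using nonneg by (subst (asm) ennreal_le_iff) auto
qed

lemma cnj_indicator [simp]: "cnj (indicator S x :: complex) = indicator S x"
  by (simp split: split_indicator)

context cantor_mu
begin

lemma L2_iff: "f \<in> L2 p \<longleftrightarrow> f \<in> borel_measurable M \<and> integrable M (\<lambda>x. (cmod (f x))\<^sup>2)"
  by (simp add: L2_def)

lemma integrable_L2: "f \<in> L2 p \<Longrightarrow> integrable M f"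
proof -
  assume f: "f \<in> L2 p"
  then have [measurable]: "f \<in> borel_measurable M"
    by (simp add: L2_iff)
  have "integrable M (\<lambda>x. norm (f x ^ 2))"
    using f by (simp add: L2_iff norm_power)
  then have "integrable M (\<lambda>x. f x ^ 2)"
    by (subst (asm) integrable_norm_iff) auto
  then show "integrable M f"
    by (rule square_integrable_imp_integrable[rotated]) simp
qed

lemma L2norm_nonneg: "0 \<le> L2norm p f"
  by (simp add: L2norm_def)

lemma integrable_indicator_times_L2:
  "f \<in> L2 p \<Longrightarrow> A \<in> sets M \<Longrightarrow> integrable M (\<lambda>x. indicator A x * f x)"
  by (rule Bochner_Integration.integrable_bound[OF integrable_L2])
     (auto simp: L2_iff split: split_indicator)

lemma norm_integral_indicator_times_le:
  assumes f: "f \<in> L2 p" and A: "A \<in> sets M"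
  shows "cmod (\<integral>x. indicator A x * f x \<partial>M) \<le> sqrt (measure M A) * L2norm p f"
proof -
  have [measurable]: "f \<in> borel_measurable M"
    using f by (simp add: L2_iff)
  have norm_eq: "(\<lambda>x. norm (indicator A x * f x)) = (\<lambda>x. cmod (f x) * indicator A x)"
    by (auto split: split_indicator)
  have ind_sq: "(\<lambda>x. (indicator A x :: real)\<^sup>2) = indicator A"
    by (auto split: split_indicator)
  have "cmod (\<integral>x. indicator A x * f x \<partial>M) \<le> (\<integral>x. cmod (f x) * indicator A x \<partial>M)"
    using integral_norm_bound[of M "\<lambda>x. indicator A x * f x"] by (simp add: norm_eq)
  also have "\<dots> \<le> sqrt ((\<integral>x. (cmod (f x))\<^sup>2 \<partial>M) * (\<integral>x. (indicator A x :: real)\<^sup>2 \<partial>M))"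
    using A f integrable_norm[OF integrable_indicator_times_L2[OF f A]]
    by (intro real_le_rsqrt Cauchy_Schwarz_integral_nonneg)
       (auto simp: L2_iff norm_eq ind_sq less_top[symmetric])
  also have "\<dots> = sqrt (measure M A) * L2norm p f"
    using A by (simp add: ind_sq L2norm_def real_sqrt_mult mult.commute)
  finally show ?thesis .
qed

definition cyl_coeff :: "nat list \<Rightarrow> (real \<Rightarrow> complex) \<Rightarrow> complex" where
  "cyl_coeff u f = inner_mu p (indicator (Cw u)) f"

definition level_op :: "nat \<Rightarrow> (real \<Rightarrow> complex) \<Rightarrow> real \<Rightarrow> complex" where
  "level_op n f x = (\<Sum>u\<in>words_of_len n. cyl_coeff u f * indicator (Cw u) x)"

definition rho :: real where
  "rho = sqrt wmax"

lemma rho_bounds: "0 \<le> rho" "rho < 1"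
  using wmax_bounds by (auto simp: rho_def)

lemma cyl_coeff_eq_integral: "cyl_coeff u f = (\<integral>x. indicator (Cw u) x * f x \<partial>M)"
  by (simp add: cyl_coeff_def inner_mu_def)

lemma Km_eq_sum_level_op: "Km p m f x = (\<Sum>n\<le>m. level_op n f x)"
proof -
  have "Km p m f x = (\<Sum>u\<in>(\<Union>n\<le>m. words_of_len n). cyl_coeff u f * indicator (Cw u) x)"
    by (simp add: Km_def cyl_coeff_def words_upto_eq_UN)
  also have "\<dots> = (\<Sum>n\<le>m. level_op n f x)"
    unfolding level_op_def
    by (rule sum.UNION_disjoint) (use finite_words_of_len in \<open>auto simp: words_of_len_def\<close>)
  finally show ?thesis .
qed

lemma norm_cyl_coeff_le:
  assumes f: "f \<in> L2 p" and u: "u \<in> words_of_len n"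
  shows "cmod (cyl_coeff u f) \<le> rho ^ n * L2norm p f"
proof -
  have "cmod (cyl_coeff u f) \<le> sqrt (measure M (Cw u)) * L2norm p f"
    unfolding cyl_coeff_eq_integral by (rule norm_integral_indicator_times_le[OF f Cw_in_sets_M[OF u]])
  also have "\<dots> \<le> rho ^ n * L2norm p f"
  proof (intro mult_right_mono L2norm_nonneg)
    have "measure M (Cw u) \<le> wmax ^ n"
      using measure_Cw_le[of u] u by (auto simp: words_of_len_def)
    then show "sqrt (measure M (Cw u)) \<le> rho ^ n"
      by (simp add: rho_def real_sqrt_power[symmetric])
  qed
  finally show ?thesis .
qed

lemma level_op_on_Cw: "u \<in> words_of_len n \<Longrightarrow> x \<in> Cw u \<Longrightarrow> level_op n f x = cyl_coeff u f"
proof -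
  assume u: "u \<in> words_of_len n" and x: "x \<in> Cw u"
  have "level_op n f x = cyl_coeff u f * indicator (Cw u) x
          + (\<Sum>v\<in>words_of_len n - {u}. cyl_coeff v f * indicator (Cw v) x)"
    unfolding level_op_def by (rule sum.remove[OF finite_words_of_len u])
  also have "(\<Sum>v\<in>words_of_len n - {u}. cyl_coeff v f * indicator (Cw v) x) = 0"
    using Cw_disjoint[OF u _ x] by (intro sum.neutral) (auto split: split_indicator)
  finally show ?thesis
    using x by simp
qed

lemma level_op_outside: "(\<forall>u\<in>words_of_len n. x \<notin> Cw u) \<Longrightarrow> level_op n f x = 0"
  unfolding level_op_def by (intro sum.neutral) auto

lemma norm_level_op_le: "f \<in> L2 p \<Longrightarrow> cmod (level_op n f x) \<le> rho ^ n * L2norm p f"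
  using level_op_on_Cw level_op_outside norm_cyl_coeff_le rho_bounds(1) L2norm_nonneg
  by (cases "\<exists>u\<in>words_of_len n. x \<in> Cw u") fastforce+

lemma sums_rho_powers: "(\<lambda>n. rho ^ n * B) sums (B / (1 - rho))"
  using sums_mult2[OF geometric_sums[of rho], of B] rho_bounds by (simp add: field_simps)

lemma summable_norm_level_op: "f \<in> L2 p \<Longrightarrow> summable (\<lambda>n. norm (level_op n f x))"
  by (rule summable_comparison_test'[OF sums_summable[OF sums_rho_powers], of 0])
     (auto intro: norm_level_op_le)

lemma summable_level_op: "f \<in> L2 p \<Longrightarrow> summable (\<lambda>n. level_op n f x)"
  by (rule summable_norm_cancel[OF summable_norm_level_op])

lemma Kinf_eq_suminf: "f \<in> L2 p \<Longrightarrow> Kinf p f x = (\<Sum>n. level_op n f x)"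
proof -
  assume f: "f \<in> L2 p"
  have "(\<lambda>m. \<Sum>n<Suc m. level_op n f x) \<longlonglongrightarrow> (\<Sum>n. level_op n f x)"
    using LIMSEQ_Suc[OF summable_LIMSEQ[OF summable_level_op[OF f]]] .
  then have "(\<lambda>m. Km p m f x) \<longlonglongrightarrow> (\<Sum>n. level_op n f x)"
    by (simp add: Km_eq_sum_level_op lessThan_Suc_atMost)
  then show ?thesis
    unfolding Kinf_def by (rule limI)
qed

lemma norm_Kinf_le: "f \<in> L2 p \<Longrightarrow> cmod (Kinf p f x) \<le> L2norm p f / (1 - rho)"
proof -
  assume f: "f \<in> L2 p"
  have "cmod (Kinf p f x) \<le> (\<Sum>n. norm (level_op n f x))"
    unfolding Kinf_eq_suminf[OF f] by (rule summable_norm[OF summable_norm_level_op[OF f]])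
  also have "\<dots> \<le> (\<Sum>n. rho ^ n * L2norm p f)"
    by (intro suminf_le norm_level_op_le f summable_norm_level_op sums_summable[OF sums_rho_powers])
  also have "\<dots> = L2norm p f / (1 - rho)"
    using sums_rho_powers by (simp add: sums_iff)
  finally show ?thesis .
qed

lemma borel_measurable_level_op: "level_op n f \<in> borel_measurable M"
  unfolding level_op_def[abs_def] using Cw_in_sets_M
  by (intro borel_measurable_sum borel_measurable_times borel_measurable_const borel_measurable_indicator)
     auto

lemma borel_measurable_Kinf: "f \<in> L2 p \<Longrightarrow> Kinf p f \<in> borel_measurable M"
proof -
  assume "f \<in> L2 p"
  then have "Kinf p f = (\<lambda>x. \<Sum>n. level_op n f x)"
    using Kinf_eq_suminf by auto
  then show ?thesis
    using borel_measurable_level_op by (simp add: borel_measurable_suminf)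
qed

lemma bounded_in_L2:
  assumes f: "f \<in> borel_measurable M" and bound: "\<And>x. x \<in> space M \<Longrightarrow> cmod (f x) \<le> B"
  shows "f \<in> L2 p" "L2norm p f \<le> B"
proof -
  have B: "0 \<le> B"
    using bound[of 0] by (auto simp: space_M intro: order_trans[OF norm_ge_zero])
  have [measurable]: "(\<lambda>x. (cmod (f x))\<^sup>2) \<in> borel_measurable M"
    using f by measurable
  have int: "integrable M (\<lambda>x. (cmod (f x))\<^sup>2)"
    by (rule Bochner_Integration.integrable_bound[OF integrable_const[of "B\<^sup>2"]])
       (auto intro!: AE_I2 power_mono bound simp: B)
  then show "f \<in> L2 p"
    using f by (simp add: L2_iff)
  have "(\<integral>x. (cmod (f x))\<^sup>2 \<partial>M) \<le> (\<integral>x. B\<^sup>2 \<partial>M)"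
    by (intro integral_mono_AE int integrable_const AE_I2 impI power_mono bound) auto
  then have "sqrt (\<integral>x. (cmod (f x))\<^sup>2 \<partial>M) \<le> sqrt (B\<^sup>2)"
    by (intro real_sqrt_le_mono) (simp add: prob_space)
  then show "L2norm p f \<le> B"
    unfolding L2norm_def using B by simp
qed

lemma Kinf_in_L2: "f \<in> L2 p \<Longrightarrow> Kinf p f \<in> L2 p"
  using bounded_in_L2(1)[OF borel_measurable_Kinf norm_Kinf_le] .

lemma L2norm_Kinf_le: "f \<in> L2 p \<Longrightarrow> L2norm p (Kinf p f) \<le> L2norm p f / (1 - rho)"
  using bounded_in_L2(2)[OF borel_measurable_Kinf norm_Kinf_le] .

end

lemma norm_add_squared_le: "(norm (a + b))\<^sup>2 \<le> 2 * (norm a)\<^sup>2 + 2 * (norm b)\<^sup>2"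
proof -
  have "(norm (a + b))\<^sup>2 \<le> (norm a + norm b)\<^sup>2"
    by (intro power_mono norm_triangle_ineq) auto
  also have "\<dots> \<le> 2 * (norm a)\<^sup>2 + 2 * (norm b)\<^sup>2"
    using zero_le_power2[of "norm a - norm b"] unfolding power2_sum power2_diff by linarith
  finally show ?thesis .
qed

context cantor_mu
begin

lemma L2_add: "f \<in> L2 p \<Longrightarrow> g \<in> L2 p \<Longrightarrow> (\<lambda>x. f x + g x) \<in> L2 p"
proof -
  assume f: "f \<in> L2 p" and g: "g \<in> L2 p"
  have [measurable]: "f \<in> borel_measurable M" "g \<in> borel_measurable M"
    using f g by (auto simp: L2_iff)
  have "integrable M (\<lambda>x. 2 * (cmod (f x))\<^sup>2 + 2 * (cmod (g x))\<^sup>2)"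
    using f g by (auto simp: L2_iff)
  then have "integrable M (\<lambda>x. (cmod (f x + g x))\<^sup>2)"
    by (rule Bochner_Integration.integrable_bound) (auto intro!: AE_I2 order_trans[OF norm_add_squared_le])
  then show ?thesis
    by (simp add: L2_iff)
qed

lemma L2_scale: "f \<in> L2 p \<Longrightarrow> (\<lambda>x. c * f x) \<in> L2 p"
proof -
  assume f: "f \<in> L2 p"
  have [measurable]: "f \<in> borel_measurable M"
    using f by (auto simp: L2_iff)
  have "integrable M (\<lambda>x. (cmod c)\<^sup>2 * (cmod (f x))\<^sup>2)"
    using f by (auto simp: L2_iff)
  then show ?thesis
    by (simp add: L2_iff norm_mult power_mult_distrib)
qed

lemma L2_zero: "(\<lambda>x. 0) \<in> L2 p"
  by (simp add: L2_iff)

lemma L2_diff: "f \<in> L2 p \<Longrightarrow> g \<in> L2 p \<Longrightarrow> (\<lambda>x. f x - g x) \<in> L2 p"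
  using L2_add[of f "\<lambda>x. (-1) * g x"] L2_scale[of g "-1"] by simp

lemma L2_sum: "finite I \<Longrightarrow> (\<And>i. i \<in> I \<Longrightarrow> f i \<in> L2 p) \<Longrightarrow> (\<lambda>x. \<Sum>i\<in>I. f i x) \<in> L2 p"
  by (induction I rule: finite_induct) (auto intro: L2_add L2_zero)

lemma level_op_add:
  assumes "f \<in> L2 p" "g \<in> L2 p"
  shows "level_op n (\<lambda>x. f x + g x) x = level_op n f x + level_op n g x"
proof -
  have "cyl_coeff u (\<lambda>x. f x + g x) = cyl_coeff u f + cyl_coeff u g" if "u \<in> words_of_len n" for u
    unfolding cyl_coeff_eq_integral
    using integrable_indicator_times_L2[OF _ Cw_in_sets_M[OF that]] assms
    by (simp add: distrib_left Bochner_Integration.integral_add)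
  then show ?thesis
    unfolding level_op_def by (simp add: distrib_right sum.distrib)
qed

lemma level_op_scale: "level_op n (\<lambda>x. c * f x) x = c * level_op n f x"
  unfolding level_op_def cyl_coeff_eq_integral
  by (simp add: sum_distrib_left mult.left_commute mult.assoc)

lemma Kinf_add:
  assumes f: "f \<in> L2 p" and g: "g \<in> L2 p"
  shows "Kinf p (\<lambda>x. f x + g x) x = Kinf p f x + Kinf p g x"
  using suminf_add[OF summable_level_op[OF f] summable_level_op[OF g]]
  by (simp add: Kinf_eq_suminf f g L2_add level_op_add)

lemma Kinf_scale: "f \<in> L2 p \<Longrightarrow> Kinf p (\<lambda>x. c * f x) x = c * Kinf p f x"
  using suminf_mult[OF summable_level_op] by (simp add: Kinf_eq_suminf L2_scale level_op_scale)

lemma Kinf_zero: "Kinf p (\<lambda>x. 0) = (\<lambda>x. 0)"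
  using Kinf_scale[OF L2_zero, of 0] by auto

lemma Kinf_sum:
  "finite I \<Longrightarrow> (\<And>i. i \<in> I \<Longrightarrow> f i \<in> L2 p) \<Longrightarrow> Kinf p (\<lambda>x. \<Sum>i\<in>I. f i x) x = (\<Sum>i\<in>I. Kinf p (f i) x)"
proof (induction I rule: finite_induct)
  case (insert a I)
  then show ?case
    using Kinf_add[of "f a" "\<lambda>x. \<Sum>i\<in>I. f i x"] L2_sum[of I f] by simp
qed (simp add: Kinf_zero)

lemma Kinf_diff: "f \<in> L2 p \<Longrightarrow> g \<in> L2 p \<Longrightarrow> Kinf p (\<lambda>x. f x - g x) x = Kinf p f x - Kinf p g x"
  using Kinf_add[of f "\<lambda>x. (-1) * g x" x] Kinf_scale[of g "-1" x] L2_scale[of g "-1"] by simp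

lemma Kinf_cong_AE:
  assumes [measurable]: "f \<in> borel_measurable M" "g \<in> borel_measurable M"
    and "AE x in M. f x = g x"
  shows "Kinf p f = Kinf p g"
proof -
  have "inner_mu p (indicator (Cw u)) f = inner_mu p (indicator (Cw u)) g" if "set u \<subseteq> {0,2}" for u
  proof -
    have [measurable]: "Cw u \<in> sets M"
      using Cw_in_unit_borel[OF that] sets_M by simp
    show ?thesis
      unfolding inner_mu_def using assms(3) by (intro integral_cong_AE) auto
  qed
  then have "Km p m f x = Km p m g x" for m x
    by (auto simp: Km_def words_upto_def intro!: sum.cong)
  then show ?thesis
    by (intro ext) (simp add: Kinf_def)
qed

lemma L2norm_scale: "L2norm p (\<lambda>x. c * f x) = cmod c * L2norm p f"
  by (simp add: L2norm_def norm_mult power_mult_distrib real_sqrt_mult)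

lemma L2norm_cong_AE:
  "f \<in> borel_measurable M \<Longrightarrow> g \<in> borel_measurable M \<Longrightarrow> AE x in M. f x = g x \<Longrightarrow> L2norm p f = L2norm p g"
  unfolding L2norm_def by (subst integral_cong_AE[where g = "\<lambda>x. (cmod (g x))\<^sup>2"]) auto

lemma L2norm_eq_0_imp_AE: "f \<in> L2 p \<Longrightarrow> L2norm p f = 0 \<Longrightarrow> AE x in M. f x = 0"
proof -
  assume f: "f \<in> L2 p" and "L2norm p f = 0"
  then have "(\<integral>x. (cmod (f x))\<^sup>2 \<partial>M) = 0"
    by (simp add: L2norm_def)
  then have "AE x in M. (cmod (f x))\<^sup>2 = 0"
    using f by (subst (asm) integral_nonneg_eq_0_iff_AE) (auto simp: L2_iff)
  then show ?thesis
    by simp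
qed

lemma L2norm_Kinf_le_Kinf_norm_unit:
  "f \<in> L2 p \<Longrightarrow> L2norm p f \<le> 1 \<Longrightarrow> L2norm p (Kinf p f) \<le> Kinf_norm p"
  unfolding Kinf_norm_def
proof (rule cSup_upper)
  show "bdd_above {L2norm p (Kinf p f) | f. f \<in> L2 p \<and> L2norm p f \<le> 1}"
  proof (rule bdd_aboveI, safe)
    fix f assume "f \<in> L2 p" "L2norm p f \<le> 1"
    then show "L2norm p (Kinf p f) \<le> 1 / (1 - rho)"
      using L2norm_Kinf_le[of f] rho_bounds by (smt (verit) divide_right_mono)
  qed
qed auto

lemma Kinf_norm_nonneg: "0 \<le> Kinf_norm p"
  using L2norm_Kinf_le_Kinf_norm_unit[OF L2_zero] by (simp add: Kinf_zero L2norm_def)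

lemma L2norm_Kinf_le_Kinf_norm:
  assumes f: "f \<in> L2 p"
  shows "L2norm p (Kinf p f) \<le> Kinf_norm p * L2norm p f"
proof (cases "L2norm p f = 0")
  case True
  then have "Kinf p f = Kinf p (\<lambda>x. 0)"
    using f L2norm_eq_0_imp_AE[OF f] by (intro Kinf_cong_AE) (auto simp: L2_iff)
  then show ?thesis
    using True by (simp add: Kinf_zero L2norm_def)
next
  case False
  then have pos: "0 < L2norm p f"
    using L2norm_nonneg[of f] by simp
  define c where "c = complex_of_real (1 / L2norm p f)"
  have "L2norm p (\<lambda>x. c * f x) = 1"
    using pos by (simp only: L2norm_scale c_def norm_of_real) simp
  then have "L2norm p (Kinf p (\<lambda>x. c * f x)) \<le> Kinf_norm p"
    by (intro L2norm_Kinf_le_Kinf_norm_unit L2_scale f) simp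
  moreover have "Kinf p (\<lambda>x. c * f x) = (\<lambda>x. c * Kinf p f x)"
    using Kinf_scale[OF f] by auto
  ultimately have "L2norm p (Kinf p f) / L2norm p f \<le> Kinf_norm p"
    using pos by (simp only: L2norm_scale c_def norm_of_real) simp
  then show ?thesis
    using pos by (simp add: divide_le_eq)
qed

end

section \<open>The Neumann series of the resolvent\<close>

lemma norm_suminf_minus_partial_le:
  fixes a :: "nat \<Rightarrow> 'a::banach"
  assumes a: "\<And>n. norm (a n) \<le> B * r ^ n" and r: "0 \<le> r" "r < 1"
  shows "summable a" "norm (suminf a - (\<Sum>n<k. a n)) \<le> B * r ^ k / (1 - r)"
proof -
  have geom: "(\<lambda>n. B * r ^ n) sums (B / (1 - r))"
    using sums_mult[OF geometric_sums[of r], of B] r by simp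
  have summable_norm_a: "summable (\<lambda>n. norm (a n))"
    by (rule summable_comparison_test'[OF sums_summable[OF geom], of 0]) (use a in auto)
  then show "summable a"
    by (rule summable_norm_cancel)
  have "suminf a - (\<Sum>n<k. a n) = (\<Sum>n. a (n + k))"
    using suminf_split_initial_segment[OF \<open>summable a\<close>, of k] by simp
  also have "norm \<dots> \<le> (\<Sum>n. norm (a (n + k)))"
    by (rule summable_norm[OF summable_ignore_initial_segment[OF summable_norm_a]])
  also have "\<dots> \<le> (\<Sum>n. r ^ k * (B * r ^ n))"
    using a[of "_ + k"]
    by (intro suminf_le summable_ignore_initial_segment[OF summable_norm_a] summable_mult
          sums_summable[OF geom])
       (simp add: power_add mult_ac)
  also have "\<dots> = B * r ^ k / (1 - r)"
    using sums_mult[OF geom, of "r ^ k"] by (simp add: sums_iff)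
  finally show "norm (suminf a - (\<Sum>n<k. a n)) \<le> B * r ^ k / (1 - r)" .
qed

context cantor_mu
begin

definition Kpow_phi :: "nat \<Rightarrow> real \<Rightarrow> complex" where
  "Kpow_phi n = (Kinf p ^^ n) phi"

lemma Kpow_phi_0: "Kpow_phi 0 = phi"
  by (simp add: Kpow_phi_def)

lemma Kpow_phi_Suc: "Kpow_phi (Suc n) = Kinf p (Kpow_phi n)"
  by (simp add: Kpow_phi_def)

lemma moment_eq_inner_Kpow_phi: "moment p n = inner_mu p phi (Kpow_phi n)"
  by (simp add: moment_def Kpow_phi_def)

lemma phi_measurable: "phi \<in> borel_measurable M"
  unfolding phi_def using Cantor_in_sets_M by (rule borel_measurable_indicator)

lemma norm_phi_le: "cmod (phi x) \<le> 1"
  by (simp add: phi_def split: split_indicator)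

lemma phi_in_L2: "phi \<in> L2 p"
  using bounded_in_L2(1)[OF phi_measurable norm_phi_le] .

lemma L2norm_phi: "L2norm p phi = 1"
proof -
  have "(\<lambda>x. (cmod (phi x))\<^sup>2) = (indicator Cantor :: real \<Rightarrow> real)"
    by (auto simp: phi_def split: split_indicator)
  then show ?thesis
    using Cantor_in_sets_M by (simp add: L2norm_def measure_Cantor)
qed

lemma Kpow_phi_in_L2: "Kpow_phi n \<in> L2 p"
  by (induction n) (auto simp: Kpow_phi_0 Kpow_phi_Suc phi_in_L2 Kinf_in_L2)

lemma Kpow_phi_measurable: "Kpow_phi n \<in> borel_measurable M"
  using Kpow_phi_in_L2 by (simp add: L2_iff)

lemma L2norm_Kpow_phi_le: "L2norm p (Kpow_phi n) \<le> Kinf_norm p ^ n"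
proof (induction n)
  case (Suc n)
  have "L2norm p (Kpow_phi (Suc n)) \<le> Kinf_norm p * L2norm p (Kpow_phi n)"
    unfolding Kpow_phi_Suc by (rule L2norm_Kinf_le_Kinf_norm[OF Kpow_phi_in_L2])
  also have "\<dots> \<le> Kinf_norm p * Kinf_norm p ^ n"
    using Suc Kinf_norm_nonneg by (intro mult_left_mono) auto
  finally show ?case by simp
qed (simp add: Kpow_phi_0 L2norm_phi)

lemma norm_Kpow_phi_le:
  assumes R: "Kinf_norm p \<le> R" "0 < R"
  shows "cmod (Kpow_phi n x) \<le> max 1 (1 / ((1 - rho) * R)) * R ^ n"
proof (cases n)
  case 0
  then show ?thesis
    using norm_phi_le[of x] by (simp add: Kpow_phi_0)
next
  case (Suc m)
  have "cmod (Kpow_phi n x) \<le> L2norm p (Kpow_phi m) / (1 - rho)"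
    using norm_Kinf_le[OF Kpow_phi_in_L2] Suc by (simp add: Kpow_phi_Suc)
  also have "\<dots> \<le> R ^ m / (1 - rho)"
    using L2norm_Kpow_phi_le[of m] power_mono[OF R(1) Kinf_norm_nonneg] rho_bounds
    by (intro divide_right_mono) (auto intro: order_trans)
  also have "\<dots> = 1 / ((1 - rho) * R) * R ^ n"
    using Suc R rho_bounds by simp
  also have "\<dots> \<le> max 1 (1 / ((1 - rho) * R)) * R ^ n"
    using R by (intro mult_right_mono) auto
  finally show ?thesis .
qed

lemma phi_times_integrable: "f \<in> L2 p \<Longrightarrow> integrable M (\<lambda>x. indicator Cantor x * f x)"
  using integrable_indicator_times_L2[OF _ Cantor_in_sets_M] .

lemma inner_phi_eq_integral: "inner_mu p phi f = (\<integral>x. indicator Cantor x * f x \<partial>M)"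
  by (simp add: inner_mu_def phi_def)

lemma norm_inner_phi_le: "f \<in> L2 p \<Longrightarrow> cmod (inner_mu p phi f) \<le> L2norm p f"
  using norm_integral_indicator_times_le[OF _ Cantor_in_sets_M, of f]
  by (simp add: inner_phi_eq_integral measure_Cantor)

lemma inner_phi_diff:
  "f \<in> L2 p \<Longrightarrow> g \<in> L2 p \<Longrightarrow> inner_mu p phi (\<lambda>x. f x - g x) = inner_mu p phi f - inner_mu p phi g"
  unfolding inner_phi_eq_integral
  by (simp add: right_diff_distrib Bochner_Integration.integral_diff phi_times_integrable)

lemma inner_phi_add:
  "f \<in> L2 p \<Longrightarrow> g \<in> L2 p \<Longrightarrow> inner_mu p phi (\<lambda>x. f x + g x) = inner_mu p phi f + inner_mu p phi g"
  unfolding inner_phi_eq_integral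
  by (simp add: distrib_left Bochner_Integration.integral_add phi_times_integrable)

lemma inner_phi_scale: "inner_mu p phi (\<lambda>x. c * f x) = c * inner_mu p phi f"
  unfolding inner_phi_eq_integral by (simp add: mult.left_commute)

lemma inner_phi_sum:
  "finite I \<Longrightarrow> (\<And>i. i \<in> I \<Longrightarrow> f i \<in> L2 p) \<Longrightarrow>
     inner_mu p phi (\<lambda>x. \<Sum>i\<in>I. f i x) = (\<Sum>i\<in>I. inner_mu p phi (f i))"
proof (induction I rule: finite_induct)
  case (insert a I)
  then show ?case
    by (simp add: inner_phi_add L2_sum)
qed (simp add: inner_phi_eq_integral)

lemma norm_moment_le: "cmod (moment p n) \<le> Kinf_norm p ^ n"
  using norm_inner_phi_le[OF Kpow_phi_in_L2, of n] L2norm_Kpow_phi_le[of n]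
  by (simp add: moment_eq_inner_Kpow_phi)

lemma uniform_limit_L2:
  assumes G: "\<And>k. G k \<in> L2 p" and g: "g \<in> borel_measurable M"
    and bound: "\<And>k x. cmod (g x - G k x) \<le> T k" and T: "T \<longlonglongrightarrow> 0"
  shows "g \<in> L2 p"
    and "(\<lambda>k. Kinf p (G k) x) \<longlonglongrightarrow> Kinf p g x"
    and "(\<lambda>k. inner_mu p phi (G k)) \<longlonglongrightarrow> inner_mu p phi g"
proof -
  have G_measurable: "G k \<in> borel_measurable M" for k
    using G by (simp add: L2_iff)
  have "(\<lambda>x. g x - G 0 x) \<in> borel_measurable M"
    using g G_measurable by measurable
  then have "(\<lambda>x. (g x - G 0 x) + G 0 x) \<in> L2 p"
    using bounded_in_L2(1) bound G L2_add by blast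
  then show g_L2: "g \<in> L2 p"
    by simp
  have diff_L2: "(\<lambda>x. g x - G k x) \<in> L2 p" and L2norm_diff: "L2norm p (\<lambda>x. g x - G k x) \<le> T k" for k
    using bounded_in_L2[of "\<lambda>x. g x - G k x"] L2_diff[OF g_L2 G] bound by (auto simp: L2_iff)
  have Kinf_diff_le: "norm (Kinf p g x - Kinf p (G k) x) \<le> T k / (1 - rho)" for k
  proof -
    have "norm (Kinf p g x - Kinf p (G k) x) = cmod (Kinf p (\<lambda>y. g y - G k y) x)"
      by (simp add: Kinf_diff[OF g_L2 G])
    also have "\<dots> \<le> L2norm p (\<lambda>y. g y - G k y) / (1 - rho)"
      by (rule norm_Kinf_le[OF diff_L2])
    also have "\<dots> \<le> T k / (1 - rho)"
      using L2norm_diff rho_bounds by (intro divide_right_mono) auto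
    finally show ?thesis .
  qed
  have "(\<lambda>k. Kinf p g x - Kinf p (G k) x) \<longlonglongrightarrow> 0"
  proof (rule Lim_null_comparison)
    show "\<forall>\<^sub>F k in sequentially. norm (Kinf p g x - Kinf p (G k) x) \<le> T k / (1 - rho)"
      using Kinf_diff_le by simp
    show "(\<lambda>k. T k / (1 - rho)) \<longlonglongrightarrow> 0"
      using tendsto_divide_zero[OF T] by simp
  qed
  then show "(\<lambda>k. Kinf p (G k) x) \<longlonglongrightarrow> Kinf p g x"
    by (rule Lim_transform2[OF tendsto_const])
  have "(\<lambda>k. inner_mu p phi g - inner_mu p phi (G k)) \<longlonglongrightarrow> 0"
  proof (rule Lim_null_comparison)
    show "\<forall>\<^sub>F k in sequentially. norm (inner_mu p phi g - inner_mu p phi (G k)) \<le> T k"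
      using norm_inner_phi_le[OF diff_L2] L2norm_diff
      by (intro always_eventually allI) (auto simp: inner_phi_diff[OF g_L2 G, symmetric] intro: order_trans)
  qed (rule T)
  then show "(\<lambda>k. inner_mu p phi (G k)) \<longlonglongrightarrow> inner_mu p phi g"
    by (rule Lim_transform2[OF tendsto_const])
qed

end

context cantor_mu
begin

lemma Neumann_series:
  assumes z: "Kinf_norm p < cmod z"
  defines "g \<equiv> \<lambda>x. \<Sum>n. inverse z ^ Suc n * Kpow_phi n x"
  shows "g \<in> L2 p" and "z * g x - Kinf p g x = phi x"
    and "(\<lambda>n. moment p n * inverse z ^ Suc n) sums inner_mu p phi g"
proof -
  define R where "R = (Kinf_norm p + cmod z) / 2"
  have R: "Kinf_norm p \<le> R" "0 < R" "R < cmod z"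
    using z Kinf_norm_nonneg by (auto simp: R_def)
  define B where "B = max 1 (1 / ((1 - rho) * R)) / cmod z"
  define r where "r = R / cmod z"
  have r: "0 \<le> r" "r < 1"
    using R by (auto simp: r_def divide_less_eq_1)
  have z0: "z \<noteq> 0"
    using R by auto
  define G where "G k x = (\<Sum>n<k. inverse z ^ Suc n * Kpow_phi n x)" for k x
  have term_le: "norm (inverse z ^ Suc n * Kpow_phi n x) \<le> B * r ^ n" for n x
  proof -
    have "norm (inverse z ^ Suc n * Kpow_phi n x) = cmod (Kpow_phi n x) / cmod z ^ Suc n"
      by (simp add: norm_mult norm_power norm_inverse divide_inverse mult.commute power_inverse)
    also have "\<dots> \<le> max 1 (1 / ((1 - rho) * R)) * R ^ n / cmod z ^ Suc n"
      by (intro divide_right_mono norm_Kpow_phi_le R) simp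
    also have "\<dots> = B * r ^ n"
      by (simp add: B_def r_def power_divide)
    finally show ?thesis .
  qed
  have bound: "cmod (g x - G k x) \<le> B * r ^ k / (1 - r)" for k x
    using norm_suminf_minus_partial_le(2)[OF term_le r] by (simp add: g_def G_def)
  have G_L2: "G k \<in> L2 p" for k
    unfolding G_def[abs_def] by (rule L2_sum) (auto intro: L2_scale Kpow_phi_in_L2)
  have "g \<in> borel_measurable M"
    unfolding g_def using Kpow_phi_measurable by measurable
  note limits = uniform_limit_L2[OF G_L2 this bound]
  have "(\<lambda>k. B * r ^ k / (1 - r)) \<longlonglongrightarrow> 0"
    using r by (intro tendsto_divide_zero tendsto_mult_right_zero LIMSEQ_power_zero) auto
  note limits = limits[OF this]
  then show "g \<in> L2 p"
    by blast
  have telescope: "z * G k x - Kinf p (G k) x = phi x - inverse z ^ k * Kpow_phi k x" for k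
  proof -
    have "z * G k x = (\<Sum>n<k. inverse z ^ n * Kpow_phi n x)"
      unfolding G_def sum_distrib_left using z0 by (intro sum.cong) (auto simp: field_simps)
    moreover have "Kinf p (G k) x = (\<Sum>n<k. inverse z ^ Suc n * Kpow_phi (Suc n) x)"
      unfolding G_def[abs_def] by (simp add: Kinf_sum Kinf_scale Kpow_phi_in_L2 L2_scale Kpow_phi_Suc)
    ultimately have "z * G k x - Kinf p (G k) x
        = (\<Sum>n<k. inverse z ^ n * Kpow_phi n x - inverse z ^ Suc n * Kpow_phi (Suc n) x)"
      by (simp only: sum_subtractf)
    also have "\<dots> = inverse z ^ 0 * Kpow_phi 0 x - inverse z ^ k * Kpow_phi k x"
      by (rule sum_lessThan_telescope')
    finally show ?thesis
      by (simp add: Kpow_phi_0)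
  qed
  have "(\<lambda>k. inverse z ^ k * Kpow_phi k x) \<longlonglongrightarrow> 0"
  proof (rule Lim_null_comparison)
    have "norm (inverse z ^ k * Kpow_phi k x) = cmod z * norm (inverse z ^ Suc k * Kpow_phi k x)" for k
      using z0 by (simp add: norm_mult norm_power norm_inverse)
    then show "\<forall>\<^sub>F k in sequentially. norm (inverse z ^ k * Kpow_phi k x) \<le> cmod z * (B * r ^ k)"
      using term_le by (intro always_eventually allI) (simp add: mult_left_mono)
    show "(\<lambda>k. cmod z * (B * r ^ k)) \<longlonglongrightarrow> 0"
      using r by (intro tendsto_mult_right_zero LIMSEQ_power_zero) auto
  qed
  then have "(\<lambda>k. z * G k x - Kinf p (G k) x) \<longlonglongrightarrow> phi x"
    unfolding telescope using tendsto_diff[OF tendsto_const] by fastforce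
  moreover have "(\<lambda>k. G k x) \<longlonglongrightarrow> g x"
    unfolding G_def g_def by (rule summable_LIMSEQ[OF norm_suminf_minus_partial_le(1)[OF term_le r]])
  then have "(\<lambda>k. z * G k x - Kinf p (G k) x) \<longlonglongrightarrow> z * g x - Kinf p g x"
    using limits(2) by (intro tendsto_intros)
  ultimately show "z * g x - Kinf p g x = phi x"
    using LIMSEQ_unique by blast
  have "inner_mu p phi (G k) = (\<Sum>n<k. inner_mu p phi (\<lambda>x. inverse z ^ Suc n * Kpow_phi n x))" for k
    unfolding G_def[abs_def] by (rule inner_phi_sum) (auto intro: L2_scale Kpow_phi_in_L2)
  then have "inner_mu p phi (G k) = (\<Sum>n<k. moment p n * inverse z ^ Suc n)" for k
    by (simp only: inner_phi_scale moment_eq_inner_Kpow_phi) (simp add: mult.commute)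
  then show "(\<lambda>n. moment p n * inverse z ^ Suc n) sums inner_mu p phi g"
    using limits(3) by (simp add: sums_def)
qed

lemma resolvent_equation_unique_AE:
  assumes z: "Kinf_norm p < cmod z"
    and g: "g \<in> L2 p" "AE x in M. z * g x - Kinf p g x = phi x"
    and h: "h \<in> L2 p" "AE x in M. z * h x - Kinf p h x = phi x"
  shows "AE x in M. g x = h x"
proof -
  define d where "d x = g x - h x" for x
  have d: "d \<in> L2 p"
    unfolding d_def[abs_def] by (rule L2_diff[OF g(1) h(1)])
  have Kinf_d: "Kinf p d x = Kinf p g x - Kinf p h x" for x
    unfolding d_def[abs_def] by (rule Kinf_diff[OF g(1) h(1)])
  have "AE x in M. Kinf p d x = z * d x"
    using g(2) h(2) by eventually_elim (simp add: Kinf_d d_def algebra_simps)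
  then have "L2norm p (Kinf p d) = L2norm p (\<lambda>x. z * d x)"
    using d by (intro L2norm_cong_AE borel_measurable_Kinf) (auto simp: L2_iff)
  then have "cmod z * L2norm p d \<le> Kinf_norm p * L2norm p d"
    using L2norm_Kinf_le_Kinf_norm[OF d] by (simp add: L2norm_scale)
  then have "(cmod z - Kinf_norm p) * L2norm p d \<le> 0"
    by (simp add: algebra_simps)
  then have "L2norm p d = 0"
    using z L2norm_nonneg[of d] by (simp add: mult_le_0_iff)
  then show ?thesis
    using L2norm_eq_0_imp_AE[OF d] by (simp add: d_def)
qed

lemma mfun_sums_moments:
  assumes z: "Kinf_norm p < cmod z"
  shows "(\<lambda>n. moment p n * inverse z ^ Suc n) sums mfun p z"
proof -
  define g where "g x = (\<Sum>n. inverse z ^ Suc n * Kpow_phi n x)" for x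
  note g = Neumann_series[OF z, folded g_def]
  have "mfun p z = inner_mu p phi g"
    unfolding mfun_def
  proof (rule the_equality)
    show "\<exists>h\<in>L2 p. (AE x in M. z * h x - Kinf p h x = phi x) \<and> inner_mu p phi g = inner_mu p phi h"
      using g by auto
    fix c assume "\<exists>h\<in>L2 p. (AE x in M. z * h x - Kinf p h x = phi x) \<and> c = inner_mu p phi h"
    then obtain h where h: "h \<in> L2 p" "AE x in M. z * h x - Kinf p h x = phi x" "c = inner_mu p phi h"
      by blast
    have "AE x in M. indicator Cantor x * h x = indicator Cantor x * g x"
      using resolvent_equation_unique_AE[OF z h(1,2) g(1)] g(2) by auto
    then show "c = inner_mu p phi g"
      unfolding h(3) inner_phi_eq_integral using h(1) g(1)
      by (intro integral_cong_AE) (auto simp: L2_iff intro!: borel_measurable_times borel_measurable_indicator Cantor_in_sets_M)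
  qed
  then show ?thesis
    using g(3) by simp
qed

end

section \<open>Self-similarity of \<open>K\<^sub>\<infinity>\<close> and the moment recursion\<close>

definition sigma :: "real \<Rightarrow> nat \<Rightarrow> complex" where
  "sigma p n = complex_of_real (p ^ Suc n + (1 - p) ^ Suc n)"

context cantor_mu
begin

abbreviation weight :: "nat \<Rightarrow> complex" where
  "weight d \<equiv> complex_of_real (digit_weight p d)"

lemma indicator_Cw_Cons_Sd: "indicator (Cw (d # v)) (Sd d x) = (indicator (Cw v) x :: complex)"
  by (simp add: Cw_Cons inj_image_mem_iff[OF inj_Sd] split: split_indicator)

lemma cyl_coeff_Cons:
  assumes f: "f \<in> L2 p" and d: "d \<in> {0,2}" and v: "set v \<subseteq> {0,2}"
  shows "cyl_coeff (d # v) f = weight d * cyl_coeff v (\<lambda>x. f (Sd d x))"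
proof -
  define h where "h x = indicator (Cw (d # v)) x * f x" for x
  have "d # v \<in> words_of_len (Suc (length v))"
    using d v by (auto simp: words_of_len_def)
  then have h: "integrable M h"
    unfolding h_def[abs_def] by (intro integrable_indicator_times_L2[OF f] Cw_in_sets_M)
  have same: "(\<integral>x. h (Sd d x) \<partial>M) = cyl_coeff v (\<lambda>x. f (Sd d x))"
    unfolding h_def cyl_coeff_eq_integral by (simp add: indicator_Cw_Cons_Sd)
  have other: "(\<integral>x. h (Sd e x) \<partial>M) = 0" if e: "e \<in> {0,2}" "e \<noteq> d" for e
  proof -
    have "(\<integral>x. h (Sd e x) \<partial>M) = (\<integral>x. 0 \<partial>M)"
      by (rule Bochner_Integration.integral_cong[OF refl])
         (use Sd_notin_Cw_Cons[OF d e(1) _ v] e(2) in \<open>auto simp: h_def space_M split: split_indicator\<close>)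
    then show ?thesis
      by simp
  qed
  have "cyl_coeff (d # v) f = (\<integral>x. h x \<partial>M)"
    by (simp add: cyl_coeff_eq_integral h_def)
  also have "\<dots> = p *\<^sub>R (\<integral>x. h (Sd 0 x) \<partial>M) + (1 - p) *\<^sub>R (\<integral>x. h (Sd 2 x) \<partial>M)"
    by (rule integral_self_similar(3)[OF h])
  also have "\<dots> = weight d * cyl_coeff v (\<lambda>x. f (Sd d x))"
    using d same other[of 0] other[of 2] by (auto simp: digit_weight_def scaleR_conv_of_real)
  finally show ?thesis .
qed

lemma L2_comp_Sd:
  assumes f: "f \<in> L2 p" and d: "d \<in> {0,2}"
  shows "(\<lambda>x. f (Sd d x)) \<in> L2 p"
proof -
  have "f \<in> borel_measurable M" "integrable M (\<lambda>x. (cmod (f x))\<^sup>2)"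
    using f by (simp_all add: L2_iff)
  then show ?thesis
    using integral_self_similar(1,2) d measurable_compose[OF Sd_measurable[OF d]] by (auto simp: L2_iff)
qed

lemma level_op_Suc_Sd:
  assumes f: "f \<in> L2 p" and d: "d \<in> {0,2}" and x: "x \<in> {0..1}"
  shows "level_op (Suc n) f (Sd d x) = weight d * level_op n (\<lambda>y. f (Sd d y)) x"
proof (cases "\<exists>v\<in>words_of_len n. x \<in> Cw v")
  case True
  then obtain v where v: "v \<in> words_of_len n" "x \<in> Cw v"
    by blast
  have "Sd d x \<in> Cw (d # v)"
    using v by (simp add: Cw_Cons)
  then have "level_op (Suc n) f (Sd d x) = cyl_coeff (d # v) f"
    by (rule level_op_on_Cw[OF Cons_in_words_of_len[OF d v(1)]])
  also have "\<dots> = weight d * cyl_coeff v (\<lambda>y. f (Sd d y))"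
    using cyl_coeff_Cons[OF f d] v by (auto simp: words_of_len_def)
  finally show ?thesis
    using level_op_on_Cw[OF v] by simp
next
  case False
  have "Sd d x \<notin> Cw u" if u: "u \<in> words_of_len (Suc n)" for u
  proof
    assume ux: "Sd d x \<in> Cw u"
    obtain e v where ev: "u = e # v" "e \<in> {0,2}" "v \<in> words_of_len n"
      using u by (auto simp: words_of_len_Suc_iff)
    show False
    proof (cases "e = d")
      case True
      then have "x \<in> Cw v"
        using ux ev by (simp add: Cw_Cons inj_image_mem_iff[OF inj_Sd])
      then show False
        using False ev by blast
    next
      case False
      then show False
        using Sd_notin_Cw_Cons[OF ev(2) d _ _ x] ev ux by (auto simp: words_of_len_def)
    qed
  qed
  then show ?thesis
    using level_op_outside False by simp
qed

lemma level_op_0: "level_op 0 f x = inner_mu p phi f * phi x"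
proof -
  have "words_of_len 0 = {[]}"
    by (auto simp: words_of_len_def)
  then show ?thesis
    by (simp add: level_op_def cyl_coeff_def phi_def)
qed

lemma Kinf_Sd:
  assumes f: "f \<in> L2 p" and d: "d \<in> {0,2}" and x: "x \<in> {0..1}"
  shows "Kinf p f (Sd d x) = inner_mu p phi f * phi (Sd d x) + weight d * Kinf p (\<lambda>y. f (Sd d y)) x"
proof -
  have f': "(\<lambda>y. f (Sd d y)) \<in> L2 p"
    by (rule L2_comp_Sd[OF f d])
  have "Kinf p f (Sd d x) = level_op 0 f (Sd d x) + (\<Sum>n. level_op (Suc n) f (Sd d x))"
    using suminf_split_head[OF summable_level_op[OF f]] by (simp add: Kinf_eq_suminf[OF f])
  also have "(\<Sum>n. level_op (Suc n) f (Sd d x)) = weight d * Kinf p (\<lambda>y. f (Sd d y)) x"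
    using suminf_mult[OF summable_level_op[OF f']] by (simp add: level_op_Suc_Sd[OF f d x] Kinf_eq_suminf[OF f'])
  finally show ?thesis
    by (simp add: level_op_0)
qed

lemma phi_Sd_AE: "d \<in> {0,2} \<Longrightarrow> AE x in M. phi (Sd d x) = phi x"
  using AE_in_Cantor by eventually_elim (auto simp: phi_def Sd_in_Cantor)

definition Kpow_phi_Sd :: "nat \<Rightarrow> nat \<Rightarrow> real \<Rightarrow> complex" where
  "Kpow_phi_Sd d n x = weight d ^ n * Kpow_phi n x
     + (\<Sum>j<n. moment p j * weight d ^ (n - 1 - j) * Kpow_phi (n - 1 - j) x)"

lemma Kpow_phi_Sd_in_L2: "Kpow_phi_Sd d n \<in> L2 p"
  unfolding Kpow_phi_Sd_def[abs_def] by (intro L2_add L2_scale L2_sum Kpow_phi_in_L2) auto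

lemma Kinf_Kpow_phi_Sd:
  "Kinf p (Kpow_phi_Sd d n) x = weight d ^ n * Kpow_phi (Suc n) x
     + (\<Sum>j<n. moment p j * weight d ^ (n - 1 - j) * Kpow_phi (Suc (n - 1 - j)) x)"
  unfolding Kpow_phi_Sd_def[abs_def]
  by (subst Kinf_add) (auto intro!: L2_scale L2_sum Kpow_phi_in_L2
      simp: Kinf_scale Kinf_sum L2_scale Kpow_phi_in_L2 Kpow_phi_Suc)

lemma Kpow_phi_comp_Sd_AE:
  assumes d: "d \<in> {0,2}"
  shows "AE x in M. Kpow_phi n (Sd d x) = Kpow_phi_Sd d n x"
proof (induction n)
  case 0
  show ?case
    using phi_Sd_AE[OF d] by eventually_elim (simp add: Kpow_phi_0 Kpow_phi_Sd_def)
next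
  case (Suc n)
  have "(\<lambda>x. Kpow_phi n (Sd d x)) \<in> borel_measurable M"
    by (rule measurable_compose[OF Sd_measurable[OF d] Kpow_phi_measurable])
  then have K_eq: "Kinf p (\<lambda>x. Kpow_phi n (Sd d x)) = Kinf p (Kpow_phi_Sd d n)"
    using Kpow_phi_Sd_in_L2 Suc by (intro Kinf_cong_AE) (auto simp: L2_iff)
  have "AE x in M. x \<in> {0..1}"
    by (rule AE_I2) (simp add: space_M)
  with phi_Sd_AE[OF d] show ?case
  proof eventually_elim
    case (elim x)
    have "Kpow_phi (Suc n) (Sd d x) = moment p n * phi x + weight d * Kinf p (Kpow_phi_Sd d n) x"
      using elim unfolding Kpow_phi_Suc
      by (simp add: Kinf_Sd[OF Kpow_phi_in_L2 d] K_eq moment_eq_inner_Kpow_phi)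
    also have "\<dots> = Kpow_phi_Sd d (Suc n) x"
    proof -
      have shift: "weight d * (\<Sum>j<n. moment p j * weight d ^ (n - 1 - j) * Kpow_phi (Suc (n - 1 - j)) x)
          = (\<Sum>j<n. moment p j * weight d ^ (Suc n - 1 - j) * Kpow_phi (Suc n - 1 - j) x)"
        unfolding sum_distrib_left
      proof (rule sum.cong[OF refl])
        fix j assume "j \<in> {..<n}"
        then have index: "Suc n - 1 - j = Suc (n - 1 - j)"
          by simp
        show "weight d * (moment p j * weight d ^ (n - 1 - j) * Kpow_phi (Suc (n - 1 - j)) x)
            = moment p j * weight d ^ (Suc n - 1 - j) * Kpow_phi (Suc n - 1 - j) x"
          unfolding index by (simp add: mult_ac)
      qed
      show ?thesis
        unfolding Kinf_Kpow_phi_Sd distrib_left shift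
        by (simp add: Kpow_phi_Sd_def Kpow_phi_0 add_ac mult_ac)
    qed
    finally show ?case .
  qed
qed

lemma inner_phi_Kpow_phi_Sd:
  "inner_mu p phi (Kpow_phi_Sd d n) = weight d ^ n * moment p n
     + (\<Sum>j<n. moment p j * weight d ^ (n - 1 - j) * moment p (n - 1 - j))"
proof -
  have "inner_mu p phi (\<lambda>x. \<Sum>j<n. moment p j * weight d ^ (n - 1 - j) * Kpow_phi (n - 1 - j) x)
      = (\<Sum>j<n. inner_mu p phi (\<lambda>x. moment p j * weight d ^ (n - 1 - j) * Kpow_phi (n - 1 - j) x))"
    by (rule inner_phi_sum) (auto intro: L2_scale Kpow_phi_in_L2)
  then show ?thesis
    unfolding Kpow_phi_Sd_def[abs_def]
    by (subst inner_phi_add) (auto intro!: L2_scale L2_sum Kpow_phi_in_L2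
        simp only: inner_phi_scale moment_eq_inner_Kpow_phi)
qed

lemma moment_self_similar:
  "moment p n = p *\<^sub>R inner_mu p phi (Kpow_phi_Sd 0 n) + (1 - p) *\<^sub>R inner_mu p phi (Kpow_phi_Sd 2 n)"
proof -
  define h where "h x = indicator Cantor x * Kpow_phi n x" for x
  have h: "integrable M h"
    unfolding h_def[abs_def] by (rule phi_times_integrable[OF Kpow_phi_in_L2])
  have "(\<integral>x. h (Sd d x) \<partial>M) = inner_mu p phi (Kpow_phi_Sd d n)" if d: "d \<in> {0,2}" for d
  proof -
    have "AE x in M. h (Sd d x) = indicator Cantor x * Kpow_phi_Sd d n x"
      using phi_Sd_AE[OF d] Kpow_phi_comp_Sd_AE[OF d, of n] by eventually_elim (simp add: h_def phi_def)
    then have "(\<integral>x. h (Sd d x) \<partial>M) = (\<integral>x. indicator Cantor x * Kpow_phi_Sd d n x \<partial>M)"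
      using integral_self_similar(1,2)[OF h] d phi_times_integrable[OF Kpow_phi_Sd_in_L2]
      by (intro integral_cong_AE) auto
    then show ?thesis
      by (simp add: inner_phi_eq_integral)
  qed
  moreover have "moment p n = (\<integral>x. h x \<partial>M)"
    by (simp add: moment_eq_inner_Kpow_phi inner_phi_eq_integral h_def)
  ultimately show ?thesis
    using integral_self_similar(3)[OF h] by simp
qed

lemma moment_rec:
  "moment p n = sigma p n * moment p n + (\<Sum>j<n. sigma p (n - 1 - j) * moment p j * moment p (n - 1 - j))"
proof -
  have scale_in: "a * (a ^ n * m n + (\<Sum>j<n. m j * a ^ (n - Suc j) * m (n - Suc j)))
      = a ^ Suc n * m n + (\<Sum>j<n. a ^ Suc (n - Suc j) * m j * m (n - Suc j))"
    for a :: complex and m :: "nat \<Rightarrow> complex"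
    by (simp add: distrib_left sum_distrib_left mult_ac)
  let ?P = "complex_of_real p"
  have "moment p n = ?P * inner_mu p phi (Kpow_phi_Sd 0 n) + (1 - ?P) * inner_mu p phi (Kpow_phi_Sd 2 n)"
    using moment_self_similar[of n] by (simp add: scaleR_conv_of_real)
  also have "\<dots> = (?P ^ Suc n * moment p n
                    + (\<Sum>j<n. ?P ^ Suc (n - 1 - j) * moment p j * moment p (n - 1 - j)))
                + ((1 - ?P) ^ Suc n * moment p n
                    + (\<Sum>j<n. (1 - ?P) ^ Suc (n - 1 - j) * moment p j * moment p (n - 1 - j)))"
    unfolding inner_phi_Kpow_phi_Sd
    by (simp add: digit_weight_def scale_in[of ?P] scale_in[of "1 - ?P"] del: power_Suc)
  also have "\<dots> = sigma p n * moment p n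
                + (\<Sum>j<n. sigma p (n - 1 - j) * moment p j * moment p (n - 1 - j))"
    by (simp add: sigma_def distrib_right sum.distrib del: power_Suc)
  finally show ?thesis .
qed

end

lemma one_minus_power_sum_pos:
  fixes p :: real
  assumes p: "0 < p" "p < 1" and n: "n \<ge> 1"
  shows "1 - p ^ (n + 1) - (1 - p) ^ (n + 1) > 0"
proof -
  have "p ^ (n + 1) \<le> p\<^sup>2" "(1 - p) ^ (n + 1) \<le> (1 - p)\<^sup>2"
    using p n by (intro power_decreasing; simp)+
  moreover have "p\<^sup>2 + (1 - p)\<^sup>2 < 1"
    using mult_pos_pos[of p "1 - p"] p by (simp add: power2_eq_square algebra_simps)
  ultimately show ?thesis
    by linarith
qed

context cantor_mu
begin

lemma moment_0: "moment p 0 = 1"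
proof -
  have "(\<lambda>x. indicator Cantor x * phi x) = (\<lambda>x. complex_of_real (indicator Cantor x))"
    by (auto simp: phi_def split: split_indicator)
  then have "moment p 0 = complex_of_real (\<integral>x. indicator Cantor x \<partial>M)"
    by (simp add: moment_eq_inner_Kpow_phi Kpow_phi_0 inner_phi_eq_integral)
  then show ?thesis
    using Cantor_in_sets_M measure_Cantor by (simp add: less_top[symmetric])
qed

lemma moment_eq_solution:
  assumes n: "n \<ge> 1"
    and c: "c = sigma p n * c + (\<Sum>j<n. sigma p (n - 1 - j) * moment p j * moment p (n - 1 - j))"
  shows "moment p n = c"
proof -
  have "sigma p n \<noteq> 1"
    using one_minus_power_sum_pos[OF p_pos p_less_1 n]
    unfolding sigma_def of_real_eq_1_iff Suc_eq_plus1 by linarith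
  moreover have "(moment p n - c) * (1 - sigma p n) = 0"
    using moment_rec[of n] c by algebra
  ultimately show ?thesis
    by simp
qed

lemma moment_eq_of_real_solution:
  assumes n: "n \<ge> 1"
    and b: "(\<Sum>j<n. sigma p (n - 1 - j) * moment p j * moment p (n - 1 - j)) = complex_of_real b"
    and c: "c = (p ^ Suc n + (1 - p) ^ Suc n) * c + b"
  shows "moment p n = complex_of_real c"
proof (rule moment_eq_solution[OF n])
  show "complex_of_real c = sigma p n * complex_of_real c
          + (\<Sum>j<n. sigma p (n - 1 - j) * moment p j * moment p (n - 1 - j))"
    unfolding b unfolding sigma_def of_real_mult[symmetric] of_real_add[symmetric]
    by (rule arg_cong[OF c])
qed

lemma moment_1: "moment p 1 = complex_of_real (1 / (2 * p * (1 - p)))"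
proof (rule moment_eq_of_real_solution)
  show "(\<Sum>j<1. sigma p (1 - 1 - j) * moment p j * moment p (1 - 1 - j)) = complex_of_real 1"
    by (simp add: sigma_def moment_0)
  show "1 / (2 * p * (1 - p)) = (p ^ Suc 1 + (1 - p) ^ Suc 1) * (1 / (2 * p * (1 - p))) + 1"
    using p_pos p_less_1 by (simp add: divide_simps) algebra
qed simp

lemma moment_1': "moment p 1 = complex_of_real (1 / (1 - (p\<^sup>2 + (1 - p)\<^sup>2)))"
proof -
  have "1 - (p\<^sup>2 + (1 - p)\<^sup>2) = 2 * p * (1 - p)"
    by algebra
  then show ?thesis
    using moment_1 by simp
qed

lemma moment_2: "moment p 2 = complex_of_real ((p\<^sup>2 - p + 1) / (3 * p\<^sup>2 * (1 - p)\<^sup>2))"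
proof (rule moment_eq_of_real_solution)
  let ?m1 = "1 / (2 * p * (1 - p))"
  show "(\<Sum>j<2. sigma p (2 - 1 - j) * moment p j * moment p (2 - 1 - j))
      = complex_of_real ((p\<^sup>2 + (1 - p)\<^sup>2) * ?m1 + ?m1)"
    by (simp add: numeral_2_eq_2 sigma_def moment_0 moment_1[unfolded One_nat_def] power2_eq_square)
  show "(p\<^sup>2 - p + 1) / (3 * p\<^sup>2 * (1 - p)\<^sup>2)
      = (p ^ Suc 2 + (1 - p) ^ Suc 2) * ((p\<^sup>2 - p + 1) / (3 * p\<^sup>2 * (1 - p)\<^sup>2))
        + ((p\<^sup>2 + (1 - p)\<^sup>2) * ?m1 + ?m1)"
    using p_pos p_less_1 by (simp add: divide_simps) algebra
qed simp

lemma moment_3: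
  "moment p 3 = complex_of_real ((12 * p^4 - 24 * p^3 + 38 * p^2 - 26 * p + 11) /
                                 (24 * p^3 * (1 - p)^3 * (p^2 - p + 2)))"
proof (rule moment_eq_of_real_solution)
  let ?m1 = "1 / (2 * p * (1 - p))" and ?m2 = "(p\<^sup>2 - p + 1) / (3 * p\<^sup>2 * (1 - p)\<^sup>2)"
  show "(\<Sum>j<3. sigma p (3 - 1 - j) * moment p j * moment p (3 - 1 - j))
      = complex_of_real ((p ^ 3 + (1 - p) ^ 3) * ?m2 + (p\<^sup>2 + (1 - p)\<^sup>2) * ?m1 * ?m1 + ?m2)"
    by (simp add: numeral_3_eq_3 numeral_2_eq_2 sigma_def moment_0 moment_1[unfolded One_nat_def]
        moment_2[unfolded numeral_2_eq_2] power2_eq_square power3_eq_cube)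
  have "p\<^sup>2 - p + 2 \<noteq> 0"
    using zero_le_power2[of p] p_less_1 by linarith
  then show "(12 * p^4 - 24 * p^3 + 38 * p^2 - 26 * p + 11) / (24 * p^3 * (1 - p)^3 * (p^2 - p + 2))
      = (p ^ Suc 3 + (1 - p) ^ Suc 3) * ((12 * p^4 - 24 * p^3 + 38 * p^2 - 26 * p + 11) /
                                         (24 * p^3 * (1 - p)^3 * (p^2 - p + 2)))
        + ((p ^ 3 + (1 - p) ^ 3) * ?m2 + (p\<^sup>2 + (1 - p)\<^sup>2) * ?m1 * ?m1 + ?m2)"
    using p_pos p_less_1 by (simp add: divide_simps) algebra
qed simp

end

text \<open>\<open>P\<^sub>n = \<Sum>\<^sub>j\<^sub><\<^sub>n (p\<^sup>n\<^sup>-\<^sup>j + (1-p)\<^sup>n\<^sup>-\<^sup>j) X\<^sub>j X\<^sub>n\<^sub>-\<^sub>1\<^sub>-\<^sub>j\<close>, written as a list of monomials in \<open>p\<close>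
  by expanding \<open>(1-p)\<^sup>n\<^sup>-\<^sup>j\<close> binomially.\<close>
definition pair_exponents :: "nat \<Rightarrow> nat \<Rightarrow> nat list" where
  "pair_exponents n j = map (\<lambda>i. (if i = j then 1 else 0) + (if i = n - 1 - j then 1 else 0)) [0..<n]"

definition moment_poly_terms :: "nat \<Rightarrow> nat \<Rightarrow> ratpoly" where
  "moment_poly_terms n j = (1, n - j, pair_exponents n j) #
     map (\<lambda>i. (of_int ((-1) ^ i) * of_nat ((n - j) choose i), i, pair_exponents n j)) [0..<Suc (n - j)]"

definition moment_poly :: "nat \<Rightarrow> ratpoly" where
  "moment_poly n = concat (map (moment_poly_terms n) [0..<n])"

lemma ratpoly_vars_moment_poly: "ratpoly_vars n (moment_poly n)"
  by (auto simp: ratpoly_vars_def moment_poly_def moment_poly_terms_def pair_exponents_def)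

lemma prod_pair_exponents:
  fixes X :: "nat \<Rightarrow> 'a::comm_ring_1"
  assumes "j < n"
  shows "(\<Prod>i<length (pair_exponents n j). X i ^ (pair_exponents n j ! i)) = X j * X (n - 1 - j)"
proof -
  have "(\<Prod>i<length (pair_exponents n j). X i ^ (pair_exponents n j ! i))
      = (\<Prod>i<n. (if i = j then X i else 1) * (if i = n - 1 - j then X i else 1))"
    by (intro prod.cong) (auto simp: pair_exponents_def power_add)
  also have "\<dots> = X j * X (n - 1 - j)"
    using assms by (simp add: prod.distrib prod.delta')
  finally show ?thesis .
qed

lemma eval_moment_poly_terms:
  fixes x :: "'a::field_char_0"
  assumes j: "j < n"
  shows "(\<Sum>(c, e, es)\<leftarrow>moment_poly_terms n j. of_rat c * x ^ e * (\<Prod>i<length es. X i ^ (es ! i)))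
     = (x ^ (n - j) + (1 - x) ^ (n - j)) * X j * X (n - 1 - j)"
proof -
  let ?XX = "X j * X (n - 1 - j)"
  have coeff: "of_rat (of_int ((-1) ^ i) * of_nat ((n - j) choose i)) * x ^ i * ?XX
      = (of_nat ((n - j) choose i) * (- x) ^ i * 1 ^ (n - j - i)) * ?XX" for i
  proof -
    have "(of_rat (of_int ((-1) ^ i) * of_nat ((n - j) choose i)) :: 'a) = (-1) ^ i * of_nat ((n - j) choose i)"
      by (simp add: of_rat_mult of_rat_power)
    then show ?thesis
      unfolding power_minus[of x] power_one mult_1_right by (simp only: mult_ac)
  qed
  have "(\<Sum>(c, e, es)\<leftarrow>moment_poly_terms n j. of_rat c * x ^ e * (\<Prod>i<length es. X i ^ (es ! i)))
     = x ^ (n - j) * ?XX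
       + (\<Sum>i\<leftarrow>[0..<Suc (n - j)]. of_rat (of_int ((-1) ^ i) * of_nat ((n - j) choose i)) * x ^ i * ?XX)"
    by (simp add: moment_poly_terms_def prod_pair_exponents[OF j] o_def)
  also have "(\<Sum>i\<leftarrow>[0..<Suc (n - j)]. of_rat (of_int ((-1) ^ i) * of_nat ((n - j) choose i)) * x ^ i * ?XX)
     = (\<Sum>i\<le>n - j. of_nat ((n - j) choose i) * (- x) ^ i * 1 ^ (n - j - i)) * ?XX"
    by (simp only: interv_sum_list_conv_sum_set_nat set_upt atLeast0LessThan lessThan_Suc_atMost
        coeff sum_distrib_right)
  also have "(\<Sum>i\<le>n - j. of_nat ((n - j) choose i) * (- x) ^ i * 1 ^ (n - j - i)) = (1 - x) ^ (n - j)"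
    using binomial_ring[of "- x" 1 "n - j"] by simp
  finally show ?thesis
    by (simp only: distrib_right mult.assoc)
qed

lemma ratpoly_eval_moment_poly:
  fixes x :: "'a::field_char_0"
  shows "ratpoly_eval (moment_poly n) x X = (\<Sum>j<n. (x ^ (n - j) + (1 - x) ^ (n - j)) * X j * X (n - 1 - j))"
proof -
  have sum_list_concat: "sum_list (map f (concat L)) = (\<Sum>l\<leftarrow>L. sum_list (map f l))"
    for f :: "rat \<times> nat \<times> nat list \<Rightarrow> 'a" and L
    by (induction L) auto
  have "ratpoly_eval (moment_poly n) x X
      = (\<Sum>j\<leftarrow>[0..<n]. \<Sum>(c, e, es)\<leftarrow>moment_poly_terms n j. of_rat c * x ^ e * (\<Prod>i<length es. X i ^ (es ! i)))"
    unfolding ratpoly_eval_def moment_poly_def sum_list_concat by (simp add: o_def)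
  also have "\<dots> = (\<Sum>j<n. (x ^ (n - j) + (1 - x) ^ (n - j)) * X j * X (n - 1 - j))"
    by (simp add: interv_sum_list_conv_sum_set_nat atLeast0LessThan eval_moment_poly_terms)
  finally show ?thesis .
qed

lemma (in cantor_mu) moment_poly_eq:
  "complex_of_real (1 - p ^ (n + 1) - (1 - p) ^ (n + 1)) * moment p n
     = ratpoly_eval (moment_poly n) (complex_of_real p) (moment p)"
proof -
  have "complex_of_real (1 - p ^ (n + 1) - (1 - p) ^ (n + 1)) * moment p n = (1 - sigma p n) * moment p n"
    by (simp add: sigma_def)
  also have "\<dots> = (\<Sum>j<n. sigma p (n - 1 - j) * moment p j * moment p (n - 1 - j))"
    using moment_rec[of n] by (simp add: algebra_simps)
  also have "\<dots> = ratpoly_eval (moment_poly n) (complex_of_real p) (moment p)"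
    unfolding ratpoly_eval_moment_poly sigma_def by (intro sum.cong refl) (auto simp: Suc_diff_Suc)
  finally show ?thesis .
qed

section \<open>The functional equation of \<open>m\<close>\<close>

lemma functional_equation_of_fixed_point:
  fixes m a b :: "'a::field"
  assumes m: "m = (a + b) + m * (a + b)" and a: "a \<noteq> 1" and ab: "a + b \<noteq> 1"
  shows "m = a / (1 - a) + b / ((1 - a) * (1 - a - b))"
proof -
  have d1: "1 - a \<noteq> 0" and d2: "1 - a - b \<noteq> 0"
    using a ab by (auto simp: algebra_simps)
  have "m * (1 - a - b) = a + b"
    using m by algebra
  then have "m = (a + b) / (1 - a - b)"
    using d2 by (simp add: eq_divide_eq)
  also have "\<dots> = a / (1 - a) + b / ((1 - a) * (1 - a - b))"
    using d1 d2 by (simp add: divide_simps) algebra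
  finally show ?thesis .
qed

context cantor_mu
begin

lemma norm_sigma_le_1: "cmod (sigma p n) \<le> 1"
proof -
  have "p ^ Suc n \<le> p" "(1 - p) ^ Suc n \<le> 1 - p"
    using mult_left_le[of "p ^ n" p] power_le_one[of p n]
      mult_left_le[of "(1 - p) ^ n" "1 - p"] power_le_one[of "1 - p" n] p_pos p_less_1
    by simp_all
  moreover have "0 \<le> p ^ Suc n" "0 \<le> (1 - p) ^ Suc n"
    using p_pos p_less_1 by simp_all
  ultimately show ?thesis
    unfolding sigma_def norm_of_real abs_le_iff by linarith
qed

lemma moment_series_rec:
  assumes t: "cmod t * Kinf_norm p < 1"
    and m: "(\<lambda>n. moment p n * t ^ Suc n) sums m"
    and s: "(\<lambda>n. sigma p n * moment p n * t ^ Suc n) sums s"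
  shows "m = s + m * s"
proof -
  define A where "A n = moment p n * t ^ Suc n" for n
  define S where "S n = sigma p n * moment p n * t ^ Suc n" for n
  have A_le: "norm (A n) \<le> cmod t * (cmod t * Kinf_norm p) ^ n" for n
  proof -
    have "norm (A n) = cmod t * cmod t ^ n * cmod (moment p n)"
      by (simp add: A_def norm_mult norm_power mult_ac)
    also have "\<dots> \<le> cmod t * cmod t ^ n * Kinf_norm p ^ n"
      by (intro mult_left_mono norm_moment_le) simp
    finally show ?thesis
      by (simp add: power_mult_distrib mult_ac)
  qed
  have S_le: "norm (S n) \<le> norm (A n)" for n
    using norm_sigma_le_1[of n] by (simp add: S_def A_def norm_mult mult_left_le_one_le mult.assoc)
  have summable_A: "summable (\<lambda>n. norm (A n))"
    using t Kinf_norm_nonneg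
    by (intro summable_comparison_test'[OF summable_mult[OF summable_geometric], of "cmod t * Kinf_norm p" 0])
       (auto intro: A_le)
  have summable_S: "summable (\<lambda>n. norm (S n))"
    by (rule summable_comparison_test'[OF summable_A, of 0]) (use S_le in auto)
  have Cauchy: "(\<lambda>k. \<Sum>i\<le>k. A i * S (k - i)) sums (m * s)"
    using Cauchy_product_sums[OF summable_A summable_S] m s by (simp add: A_def S_def sums_iff)
  have coeff: "A (Suc k) = S (Suc k) + (\<Sum>i\<le>k. A i * S (k - i))" for k
  proof -
    have "A i * S (k - i) = t ^ Suc (Suc k) * (sigma p (k - i) * moment p i * moment p (k - i))"
      if "i \<le> k" for i
    proof -
      have "A i * S (k - i) = (t ^ Suc i * t ^ Suc (k - i)) * (sigma p (k - i) * moment p i * moment p (k - i))"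
        by (simp add: A_def S_def mult_ac)
      also have "Suc i + Suc (k - i) = Suc (Suc k)"
        using that by simp
      then have "t ^ Suc i * t ^ Suc (k - i) = t ^ Suc (Suc k)"
        by (metis power_add)
      finally show ?thesis .
    qed
    then have "(\<Sum>i\<le>k. A i * S (k - i))
        = t ^ Suc (Suc k) * (\<Sum>j<Suc k. sigma p (Suc k - 1 - j) * moment p j * moment p (Suc k - 1 - j))"
      by (simp add: sum_distrib_left lessThan_Suc_atMost)
    also have "\<dots> = t ^ Suc (Suc k) * (moment p (Suc k) - sigma p (Suc k) * moment p (Suc k))"
      using moment_rec[of "Suc k"] by (metis add_diff_cancel_left')
    finally show ?thesis
      by (simp add: A_def S_def algebra_simps)
  qed
  have "S sums s"
    using s by (simp add: S_def[abs_def])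
  then have "(\<lambda>k. S (Suc k)) sums (s - S 0)"
    by (subst sums_Suc_iff) simp
  moreover have "(\<lambda>k. A (Suc k)) = (\<lambda>k. S (Suc k) + (\<Sum>i\<le>k. A i * S (k - i)))"
    by (rule ext) (rule coeff)
  ultimately have "(\<lambda>k. A (Suc k)) sums (s - S 0 + m * s)"
    using sums_add[OF _ Cauchy] by simp
  then have "A sums (s - S 0 + m * s + A 0)"
    by (subst (asm) sums_Suc_iff)
  moreover have "A sums m"
    using m by (simp add: A_def[abs_def])
  ultimately have "m = s - S 0 + m * s + A 0"
    by (simp add: sums_unique2)
  moreover have "A 0 = S 0"
    by (simp add: A_def S_def sigma_def)
  ultimately show ?thesis
    by simp
qed

lemma norm_mfun_scaled_less:
  assumes q: "0 < q" "q \<le> 1" and z: "Kinf_norm p + 1 < cmod z"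
  shows "(\<lambda>n. moment p n * (complex_of_real q * inverse z) ^ Suc n) sums mfun p (z / complex_of_real q)"
    and "cmod (mfun p (z / complex_of_real q)) < q"
proof -
  define N where "N = Kinf_norm p"
  define u where "u = 1 / cmod z"
  have N: "0 \<le> N"
    using Kinf_norm_nonneg by (simp add: N_def)
  have z_pos: "0 < cmod z"
    using z N unfolding N_def by linarith
  have u: "0 < u" "u * (N + 1) < 1"
    using z z_pos by (auto simp: u_def N_def field_simps)
  have "cmod z \<le> cmod z / q"
    using q z_pos by (simp add: field_simps mult_le_cancel_left1)
  then have "Kinf_norm p < cmod (z / complex_of_real q)"
    using z q by (simp add: norm_divide)
  from mfun_sums_moments[OF this]
  show sums: "(\<lambda>n. moment p n * (complex_of_real q * inverse z) ^ Suc n) sums mfun p (z / complex_of_real q)"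
    by (simp add: divide_inverse mult.commute)
  define r where "r = N * q * u"
  have r: "0 \<le> r" "u < 1 - r"
    using mult_left_mono[of q 1 "N * u"] N q u by (auto simp: r_def algebra_simps)
  have term_le: "norm (moment p n * (complex_of_real q * inverse z) ^ Suc n) \<le> q * u * r ^ n" for n
  proof -
    have "norm (moment p n * (complex_of_real q * inverse z) ^ Suc n) = cmod (moment p n) * (q * u) ^ Suc n"
      using q by (simp add: norm_mult norm_power norm_inverse u_def divide_inverse)
    also have "\<dots> \<le> N ^ n * (q * u) ^ Suc n"
      using norm_moment_le[of n] q u by (intro mult_right_mono) (auto simp: N_def)
    also have "\<dots> = q * u * r ^ n"
      by (simp add: r_def power_mult_distrib)
    finally show ?thesis .
  qed
  have "cmod (mfun p (z / complex_of_real q)) \<le> q * u * r ^ 0 / (1 - r)"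
    using norm_suminf_minus_partial_le(2)[OF term_le r(1), of 0] r u sums by (simp add: sums_iff)
  also have "\<dots> < q"
    using r q u by (simp add: pos_divide_less_eq)
  finally show "cmod (mfun p (z / complex_of_real q)) < q" .
qed

lemma mfun_functional_equation:
  assumes z: "Kinf_norm p + 1 < cmod z"
  shows "mfun p z = mfun p (z / complex_of_real p) / (1 - mfun p (z / complex_of_real p))
            + mfun p (z / complex_of_real (1 - p)) /
              ((1 - mfun p (z / complex_of_real p)) *
               (1 - mfun p (z / complex_of_real p) - mfun p (z / complex_of_real (1 - p))))"
proof (rule functional_equation_of_fixed_point)
  define a where "a = mfun p (z / complex_of_real p)"
  define b where "b = mfun p (z / complex_of_real (1 - p))"
  have q: "0 < p" "p \<le> 1" "0 < 1 - p" "1 - p \<le> 1"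
    using p_pos p_less_1 by auto
  note a = norm_mfun_scaled_less[OF q(1,2) z, folded a_def]
  note b = norm_mfun_scaled_less[OF q(3,4) z, folded b_def]
  have "(\<lambda>n. moment p n * inverse z ^ Suc n) sums mfun p z"
    using norm_mfun_scaled_less(1)[OF zero_less_one order_refl z] by simp
  moreover have "(\<lambda>n. sigma p n * moment p n * inverse z ^ Suc n) sums (a + b)"
  proof -
    have terms: "(\<lambda>n. moment p n * (complex_of_real p * inverse z) ^ Suc n
                    + moment p n * (complex_of_real (1 - p) * inverse z) ^ Suc n)
        = (\<lambda>n. sigma p n * moment p n * inverse z ^ Suc n)"
      by (rule ext) (simp only: sigma_def power_mult_distrib of_real_add of_real_power; simp add: algebra_simps)
    show ?thesis
      by (subst terms[symmetric]) (rule sums_add[OF a(1) b(1)])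
  qed
  moreover have "cmod (inverse z) * Kinf_norm p < 1"
  proof -
    have "cmod (inverse z) * Kinf_norm p = Kinf_norm p / cmod z"
      by (simp add: norm_inverse divide_inverse)
    then show ?thesis
      using z Kinf_norm_nonneg by (simp add: divide_less_eq_1)
  qed
  ultimately show "mfun p z = (a + b) + mfun p z * (a + b)"
    using moment_series_rec by blast
  show "a \<noteq> 1"
    using a(2) p_less_1 by auto
  have "cmod (a + b) < 1"
    using a(2) b(2) norm_triangle_ineq[of a b] by auto
  then show "a + b \<noteq> 1"
    by auto
qed

end

theorem proposition7p2:
  shows "(\<forall>p::real. 0 < p \<and> p < 1 \<longrightarrow>
      (\<forall>z::complex. cmod z > Kinf_norm p \<longrightarrow>
          (\<lambda>n. moment p n * inverse z ^ (Suc n)) sums mfun p z)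
    \<and> (\<forall>z::complex. cmod z > Kinf_norm p + 1 \<longrightarrow>
          mfun p z = mfun p (z / complex_of_real p) / (1 - mfun p (z / complex_of_real p))
            + mfun p (z / complex_of_real (1 - p)) /
              ((1 - mfun p (z / complex_of_real p)) *
               (1 - mfun p (z / complex_of_real p) - mfun p (z / complex_of_real (1 - p)))))
    \<and> (\<forall>n::nat. n \<ge> 1 \<longrightarrow> 1 - p ^ (n + 1) - (1 - p) ^ (n + 1) > 0)
    \<and> moment p 0 = 1
    \<and> moment p 1 = complex_of_real (1 / (2 * p * (1 - p)))
    \<and> moment p 1 = complex_of_real (1 / (1 - (p^2 + (1 - p)^2)))
    \<and> moment p 2 = complex_of_real ((p^2 - p + 1) / (3 * p^2 * (1 - p)^2))
    \<and> moment p 3 = complex_of_real ((12 * p^4 - 24 * p^3 + 38 * p^2 - 26 * p + 11) /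
                                    (24 * p^3 * (1 - p)^3 * (p^2 - p + 2))))
   \<and> (\<forall>n::nat. n \<ge> 1 \<longrightarrow> (\<exists>P::ratpoly. ratpoly_vars n P \<and>
        (\<forall>p::real. 0 < p \<and> p < 1 \<longrightarrow>
           complex_of_real (1 - p ^ (n + 1) - (1 - p) ^ (n + 1)) * moment p n
             = ratpoly_eval P (complex_of_real p) (moment p))))"
proof -
  have cantor_mu: "cantor_mu p" if "0 < p \<and> p < 1" for p
    using that by unfold_locales auto
  note facts = cantor_mu.mfun_sums_moments[OF cantor_mu] cantor_mu.mfun_functional_equation[OF cantor_mu]
    one_minus_power_sum_pos[OF conjunct1 conjunct2] cantor_mu.moment_0[OF cantor_mu]
    cantor_mu.moment_1[OF cantor_mu] cantor_mu.moment_1'[OF cantor_mu] cantor_mu.moment_2[OF cantor_mu]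
    cantor_mu.moment_3[OF cantor_mu] ratpoly_vars_moment_poly cantor_mu.moment_poly_eq[OF cantor_mu]
  show ?thesis
    by (intro conjI allI impI exI) (rule facts; assumption?)+
qed

end
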